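(* Let $\mathcal B$ be a set of bidders with valuations $\{v_b\}$ on $\Omega$ and let $r\ge 0$ be reserve prices. Let $\mathcal B'=\mathcal B\cup\{a\}$ where $a$ is an additional bidder with additive valuation $v_a(S)=r(S)$, and for an allocation $\langle\Omega_b\rangle_{b\in\mathcal B}$ let $\langle\Omega'_{b'}\rangle_{b'\in\mathcal B'}$ be given by $\Omega'_b=\Omega_b$ for $b\in\mathcal B$ and $\Omega'_a=\Omega\setminus\bigcup_{b\in\mathcal B}\Omega_b$. (a1) The allocation $\langle\Omega_b\rangle$ with prices $p$ is a Walrasian equilibrium with reserve prices $r$ for $\mathcal B$ if and only if $\langle\Omega'_{b'}\rangle$ with prices $p'$ is a Walrasian equilibrium for $\mathcal B'$, where $p_j=p'_j$ for $j\in\bigcup_{b\in\mathcal B}\Omega_b$ and $p_{j'}=r_{j'}$ for $j'\in\Omega\setminus\bigcup_{b\in\mathcal B}\Omega_b$. (a2) $\langle\Omega_b\rangle$ is a Walrasian-equilibrium-with-reserve-prices-$r$ allocation if and only if (the 0/1 vector $x_{b,S}=1$ iff $S=\Omega_b$) is an optimal integral solution to the linear program $\mathrm{LP}_r$. (b) If all $v_b$ are gross substitute, then (b1) a Walrasian equilibrium with reserve prices $r$ exists for $\{v_b\}$, and (b2) the set of price vectors of Walrasian equilibria with reserve prices $r$ forms a complete lattice (closed under item-wise $\min$ and $\max$).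
   Context: $\Omega$ is a finite set of items; price vectors $p\in\mathbb{R}^\Omega_{\ge0}$, $p(S)=\sum_{j\in S}p_j$, comparisons item-wise. Each bidder has a monotone valuation $v_b:2^\Omega\to\mathbb{R}$, $v_b(\emptyset)=0$; $D_b(p)$ is the set of $S$ maximizing $v_b(S)-p(S)$. An allocation is a family of pairwise disjoint subsets $\langle\Omega_b\rangle$ of $\Omega$ (items may be unallocated); it is envy free at $p$ if $\Omega_b\in D_b(p)$ for all $b$. A Walrasian equilibrium is an envy-free allocation with prices $p\ge0$ where unallocated items have price $0$. A Walrasian equilibrium with reserve prices $r$ is an envy-free allocation with prices $p\ge r$ where every unallocated item $j$ has $p_j=r_j$. A valuation is gross substitute if for all $p^{(2)}\ge p^{(1)}\ge0$ and every $D^{(1)}\in D(p^{(1)})$ there is $D^{(2)}\in D(p^{(2)})$ containing every $j\in D^{(1)}$ with $p^{(1)}_j=p^{(2)}_j$. $\mathrm{LP}_r$: maximize $\sum_{b\in\mathcal B,S\subseteq\Omega}x_{b,S}v_b(S)+\sum_{j\in\Omega}\big(1-\sum_{b,S\ni j}x_{b,S}\big)r_j$ subject to $\sum_{b,S\ni j}x_{b,S}\le1$ for all $j\in\Omega$, $\sum_{S}x_{b,S}\le 1$ for all $b\in\mathcal B$, $x_{b,S}\ge0$. *)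

theory Defs
  imports Complex_Main
begin

definition valuation :: "'i set \<Rightarrow> ('i set \<Rightarrow> real) \<Rightarrow> bool" where
  "valuation Om v \<longleftrightarrow> v {} = 0 \<and> (\<forall>S T. S \<subseteq> T \<and> T \<subseteq> Om \<longrightarrow> v S \<le> v T)"

definition demand :: "'i set \<Rightarrow> ('i set \<Rightarrow> real) \<Rightarrow> ('i \<Rightarrow> real) \<Rightarrow> 'i set set" where
  "demand Om v p = {S. S \<subseteq> Om \<and> (\<forall>T. T \<subseteq> Om \<longrightarrow> v T - sum p T \<le> v S - sum p S)}"

definition gross_substitute :: "'i set \<Rightarrow> ('i set \<Rightarrow> real) \<Rightarrow> bool" where
  "gross_substitute Om v \<longleftrightarrow>
     (\<forall>p1 p2. (\<forall>j\<in>Om. 0 \<le> p1 j \<and> p1 j \<le> p2 j) \<longrightarrow>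
        (\<forall>D1\<in>demand Om v p1. \<exists>D2\<in>demand Om v p2. {j\<in>D1. p1 j = p2 j} \<subseteq> D2))"

definition is_allocation :: "'i set \<Rightarrow> 'b set \<Rightarrow> ('b \<Rightarrow> 'i set) \<Rightarrow> bool" where
  "is_allocation Om B A \<longleftrightarrow> (\<forall>b\<in>B. A b \<subseteq> Om) \<and>
     (\<forall>b\<in>B. \<forall>c\<in>B. b \<noteq> c \<longrightarrow> A b \<inter> A c = {})"

definition envy_free ::
  "'i set \<Rightarrow> 'b set \<Rightarrow> ('b \<Rightarrow> 'i set \<Rightarrow> real) \<Rightarrow> ('b \<Rightarrow> 'i set) \<Rightarrow> ('i \<Rightarrow> real) \<Rightarrow> bool" where
  "envy_free Om B v A p \<longleftrightarrow> (\<forall>b\<in>B. A b \<in> demand Om (v b) p)"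

definition walrasian_eq ::
  "'i set \<Rightarrow> 'b set \<Rightarrow> ('b \<Rightarrow> 'i set \<Rightarrow> real) \<Rightarrow> ('b \<Rightarrow> 'i set) \<Rightarrow> ('i \<Rightarrow> real) \<Rightarrow> bool" where
  "walrasian_eq Om B v A p \<longleftrightarrow> is_allocation Om B A \<and> envy_free Om B v A p \<and>
     (\<forall>j\<in>Om. 0 \<le> p j) \<and> (\<forall>j\<in>Om - (\<Union>b\<in>B. A b). p j = 0)"

definition walrasian_eq_reserve ::
  "'i set \<Rightarrow> 'b set \<Rightarrow> ('b \<Rightarrow> 'i set \<Rightarrow> real) \<Rightarrow> ('i \<Rightarrow> real) \<Rightarrow> ('b \<Rightarrow> 'i set) \<Rightarrow> ('i \<Rightarrow> real) \<Rightarrow> bool" where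
  "walrasian_eq_reserve Om B v r A p \<longleftrightarrow> is_allocation Om B A \<and> envy_free Om B v A p \<and>
     (\<forall>j\<in>Om. r j \<le> p j) \<and> (\<forall>j\<in>Om - (\<Union>b\<in>B. A b). p j = r j)"

definition lp_feasible :: "'i set \<Rightarrow> 'b set \<Rightarrow> ('b \<Rightarrow> 'i set \<Rightarrow> real) \<Rightarrow> bool" where
  "lp_feasible Om B x \<longleftrightarrow>
     (\<forall>b\<in>B. \<forall>S. S \<subseteq> Om \<longrightarrow> 0 \<le> x b S) \<and>
     (\<forall>j\<in>Om. (\<Sum>b\<in>B. \<Sum>S\<in>{S. S \<subseteq> Om \<and> j \<in> S}. x b S) \<le> 1) \<and>
     (\<forall>b\<in>B. (\<Sum>S\<in>Pow Om. x b S) \<le> 1)"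

definition lp_objective ::
  "'i set \<Rightarrow> 'b set \<Rightarrow> ('b \<Rightarrow> 'i set \<Rightarrow> real) \<Rightarrow> ('i \<Rightarrow> real) \<Rightarrow> ('b \<Rightarrow> 'i set \<Rightarrow> real) \<Rightarrow> real" where
  "lp_objective Om B v r x =
     (\<Sum>b\<in>B. \<Sum>S\<in>Pow Om. x b S * v b S) +
     (\<Sum>j\<in>Om. (1 - (\<Sum>b\<in>B. \<Sum>S\<in>{S. S \<subseteq> Om \<and> j \<in> S}. x b S)) * r j)"

definition lp_optimal ::
  "'i set \<Rightarrow> 'b set \<Rightarrow> ('b \<Rightarrow> 'i set \<Rightarrow> real) \<Rightarrow> ('i \<Rightarrow> real) \<Rightarrow> ('b \<Rightarrow> 'i set \<Rightarrow> real) \<Rightarrow> bool" where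
  "lp_optimal Om B v r x \<longleftrightarrow> lp_feasible Om B x \<and>
     (\<forall>y. lp_feasible Om B y \<longrightarrow> lp_objective Om B v r y \<le> lp_objective Om B v r x)"

end

theory Submission
  imports Defs
begin

text \<open>(a1) The extra bidder a, with additive valuation r, demands exactly the items priced at
  most at their reserve, so the reserve conditions of an equilibrium for B become the
  demand condition of a in an ordinary equilibrium for B + a.

  (a2) Prices supporting an allocation A with reserve r are the solutions of a finite linear
  system. By weak duality such prices make the integral point of A optimal in LP_r.
  Conversely, if the system is infeasible, Farkas' lemma (proved by Fourier-Motzkin
  elimination) gives multipliers which, read as a direction in LP_r, strictly improve A.

  (b1) For gross substitutes, an ascending auction with increment e ends in an
  e-approximate equilibrium. By weak duality the LP optimum then exceeds the maximal welfare
  by at most |B| |Om| e; letting e go to 0, a welfare-maximising allocation is an integral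
  optimum of LP_r, and (a2) provides its prices.

  (b2) Equilibrium prices support every equilibrium allocation. Gross substitutability
  makes the indirect utility submodular in the prices (shown by raising prices along a
  discretised path), so a bundle demanded at p and at q is also demanded at min p q and
  max p q.\<close>

section \<open>Farkas' lemma by Fourier-Motzkin elimination\<close>

definition fm_combine :: "'v \<Rightarrow> ('v \<Rightarrow> real) \<times> real \<Rightarrow> ('v \<Rightarrow> real) \<times> real \<Rightarrow> ('v \<Rightarrow> real) \<times> real" where
  "fm_combine w c d =
     ((\<lambda>u. (- fst d w) * fst c u + fst c w * fst d u), (- fst d w) * snd c + fst c w * snd d)"

definition fm_eliminate :: "'v \<Rightarrow> (('v \<Rightarrow> real) \<times> real) set \<Rightarrow> (('v \<Rightarrow> real) \<times> real) set" where
  "fm_eliminate w C = {c\<in>C. fst c w = 0} \<union>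
     (\<lambda>(c, d). fm_combine w c d) ` ({c\<in>C. 0 < fst c w} \<times> {c\<in>C. fst c w < 0})"

lemma finite_sets_separated:
  fixes L U :: "'a::linorder set"
  assumes "finite L" "finite U" and "\<forall>l\<in>L. \<forall>u\<in>U. l \<le> u"
  obtains t where "\<forall>l\<in>L. l \<le> t" and "\<forall>u\<in>U. t \<le> u"
proof (cases "L = {}")
  case True
  then show ?thesis using that[of "if U = {} then undefined else Min U"] assms(2) by auto
next
  case False
  then show ?thesis using that[of "Max L"] assms Max_in[OF assms(1) False] by auto
qed

lemma fm_eliminate_feasible_extend:
  fixes V :: "'v set" and C :: "(('v \<Rightarrow> real) \<times> real) set"
  assumes fin: "finite V" "finite C" and wV: "w \<notin> V"
    and feas: "\<forall>c\<in>fm_eliminate w C. (\<Sum>u\<in>V. fst c u * x' u) \<le> snd c"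
  shows "\<exists>x. \<forall>c\<in>C. (\<Sum>u\<in>insert w V. fst c u * x u) \<le> snd c"
proof -
  define P where "P = {c\<in>C. 0 < fst c w}"
  define N where "N = {c\<in>C. fst c w < 0}"
  define s where "s c = (\<Sum>u\<in>V. fst c u * x' u)" for c :: "('v \<Rightarrow> real) \<times> real"
  define bound where "bound c = (snd c - s c) / fst c w" for c :: "('v \<Rightarrow> real) \<times> real"
  txt \<open>Every constraint in P bounds x w from above, every one in N from below; the
    combined constraints say exactly that all lower bounds lie below all upper bounds.\<close>
  have s_combine: "s (fm_combine w c d) = (- fst d w) * s c + fst c w * s d" for c d
  proof -
    have "s (fm_combine w c d) = (\<Sum>u\<in>V. (- fst d w) * (fst c u * x' u) + fst c w * (fst d u * x' u))"
      unfolding s_def fm_combine_def by (rule sum.cong) (simp_all add: algebra_simps)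
    then show ?thesis by (simp only: sum.distrib sum_distrib_left s_def)
  qed
  have lower_le_upper: "bound d \<le> bound c" if "c \<in> P" "d \<in> N" for c d
  proof -
    have "fm_combine w c d \<in> fm_eliminate w C"
      using that unfolding fm_eliminate_def P_def N_def by force
    then have "s (fm_combine w c d) \<le> snd (fm_combine w c d)"
      using feas unfolding s_def by blast
    then have "(- fst d w) * s c + fst c w * s d \<le> (- fst d w) * snd c + fst c w * snd d"
      unfolding s_combine by (simp add: fm_combine_def)
    moreover have "0 < fst c w" "fst d w < 0" using that by (auto simp: P_def N_def)
    ultimately show ?thesis unfolding bound_def by (simp add: divide_simps) (simp add: algebra_simps)
  qed
  then have "\<forall>l\<in>bound ` N. \<forall>u\<in>bound ` P. l \<le> u" by blast
  moreover have "finite (bound ` N)" "finite (bound ` P)" using fin by (simp_all add: P_def N_def)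
  ultimately obtain t where lower: "\<forall>l\<in>bound ` N. l \<le> t" and upper: "\<forall>u\<in>bound ` P. t \<le> u"
    using finite_sets_separated by blast
  have "fst c w * t + s c \<le> snd c" if c: "c \<in> C" for c
  proof -
    consider (zero) "fst c w = 0" | (pos) "c \<in> P" | (neg) "c \<in> N"
      using c unfolding P_def N_def by fastforce
    then show ?thesis
    proof cases
      case zero
      then have "c \<in> fm_eliminate w C" using c by (simp add: fm_eliminate_def)
      then show ?thesis using feas zero by (simp add: s_def)
    next
      case pos
      then have "t \<le> bound c" using upper by blast
      then show ?thesis using pos by (simp add: P_def bound_def field_simps)
    next
      case neg
      then have "bound c \<le> t" using lower by blast
      then show ?thesis using neg by (simp add: N_def bound_def field_simps)
    qed
  qed
  moreover have "(\<Sum>u\<in>insert w V. fst c u * (x'(w := t)) u) = fst c w * t + s c" for c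
  proof -
    have "(\<Sum>u\<in>V. fst c u * (x'(w := t)) u) = s c"
      unfolding s_def by (rule sum.cong) (use wV in auto)
    then show ?thesis using fin wV by simp
  qed
  ultimately show ?thesis by metis
qed

lemma fm_eliminate_multipliers_pullback:
  fixes l' :: "('v \<Rightarrow> real) \<times> real \<Rightarrow> real"
  assumes fin: "finite C" and l'0: "\<forall>c\<in>fm_eliminate w C. 0 \<le> l' c"
  obtains l where "\<forall>c\<in>C. 0 \<le> l c"
    and "\<And>F. (\<And>c d. F (fm_combine w c d) = (- fst d w) * F c + fst c w * F d) \<Longrightarrow>
           (\<Sum>c\<in>C. l c * F c) = (\<Sum>c'\<in>fm_eliminate w C. l' c' * F c')"
proof -
  txt \<open>Each eliminated constraint is a nonnegative combination of at most two constraints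
    of C; mu records the coefficients of one such representation.\<close>
  define P where "P = {c\<in>C. 0 < fst c w}"
  define N where "N = {c\<in>C. fst c w < 0}"
  define Z where "Z = {c\<in>C. fst c w = 0}"
  define C' where "C' = fm_eliminate w C"
  have C'_eq: "C' = Z \<union> (\<lambda>(c, d). fm_combine w c d) ` (P \<times> N)"
    by (simp add: C'_def fm_eliminate_def Z_def P_def N_def)
  define rep where "rep c' = (SOME cd. cd \<in> P \<times> N \<and> fm_combine w (fst cd) (snd cd) = c')" for c'
  have rep: "rep c' \<in> P \<times> N \<and> fm_combine w (fst (rep c')) (snd (rep c')) = c'"
    if "c' \<in> C'" "c' \<notin> Z" for c'
    unfolding rep_def by (rule someI_ex) (use that in \<open>auto simp: C'_eq\<close>)
  define mu where "mu c' e =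
    (if c' \<in> Z then of_bool (e = c')
     else of_bool (e = fst (rep c')) * (- fst (snd (rep c')) w)
        + of_bool (e = snd (rep c')) * fst (fst (rep c')) w)" for c' e
  have mu_nonneg: "0 \<le> mu c' e" if "c' \<in> C'" for c' e
    using rep[of c'] that by (auto simp: mu_def P_def N_def)
  have mu_sum: "(\<Sum>e\<in>C. mu c' e * F e) = F c'"
    if c': "c' \<in> C'" and F: "\<And>c d. F (fm_combine w c d) = (- fst d w) * F c + fst c w * F d"
    for c' F
  proof (cases "c' \<in> Z")
    case True
    then show ?thesis using fin by (simp add: mu_def Z_def Collect_conv_if)
  next
    case False
    obtain c d where cd: "rep c' = (c, d)" by (cases "rep c'")
    have c'_eq: "c' = fm_combine w c d" and "c \<in> C" "d \<in> C"
      using rep[OF c' False] cd by (auto simp: P_def N_def)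
    have "(\<Sum>e\<in>C. mu c' e * F e) =
        (\<Sum>e\<in>C. of_bool (e = c) * (- fst d w * F e) + of_bool (e = d) * (fst c w * F e))"
      by (rule sum.cong) (simp_all add: mu_def False cd algebra_simps)
    also have "\<dots> = (- fst d w) * F c + fst c w * F d"
      using fin \<open>c \<in> C\<close> \<open>d \<in> C\<close> by (simp add: sum.distrib sum_subtractf Collect_conv_if)
    finally show ?thesis using F c'_eq by simp
  qed
  define l where "l e = (\<Sum>c'\<in>C'. l' c' * mu c' e)" for e
  show ?thesis
  proof (rule that)
    show "\<forall>e\<in>C. 0 \<le> l e"
      using l'0 mu_nonneg unfolding l_def C'_def[symmetric] by (simp add: sum_nonneg)
    show "(\<Sum>e\<in>C. l e * F e) = (\<Sum>c'\<in>fm_eliminate w C. l' c' * F c')"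
      if "\<And>c d. F (fm_combine w c d) = (- fst d w) * F c + fst c w * F d" for F
    proof -
      have "(\<Sum>e\<in>C. l e * F e) = (\<Sum>c'\<in>C'. l' c' * (\<Sum>e\<in>C. mu c' e * F e))"
        unfolding l_def by (simp add: sum_distrib_left sum_distrib_right mult.assoc sum.swap[of _ C])
      also have "\<dots> = (\<Sum>c'\<in>C'. l' c' * F c')"
        using mu_sum that by simp
      finally show ?thesis by (simp add: C'_def)
    qed
  qed
qed

lemma farkas_lemma_set:
  fixes V :: "'v set" and C :: "(('v \<Rightarrow> real) \<times> real) set"
  assumes "finite V" "finite C" and "\<nexists>x. \<forall>c\<in>C. (\<Sum>u\<in>V. fst c u * x u) \<le> snd c"
  shows "\<exists>l. (\<forall>c\<in>C. 0 \<le> l c) \<and> (\<forall>u\<in>V. (\<Sum>c\<in>C. l c * fst c u) = 0) \<and> (\<Sum>c\<in>C. l c * snd c) < 0"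
  using assms
proof (induction V arbitrary: C rule: finite_induct)
  case empty
  then obtain c where c: "c \<in> C" "snd c < 0" by force
  then show ?case
    using empty.prems(1) by (intro exI[of _ "\<lambda>d. of_bool (d = c)"]) (simp add: Collect_conv_if)
next
  case (insert w V)
  have "finite (fm_eliminate w C)" using insert.prems by (simp add: fm_eliminate_def)
  moreover have "\<nexists>x. \<forall>c\<in>fm_eliminate w C. (\<Sum>u\<in>V. fst c u * x u) \<le> snd c"
    using fm_eliminate_feasible_extend[of V C w] insert.hyps insert.prems by blast
  ultimately obtain l' where l'0: "\<forall>c\<in>fm_eliminate w C. 0 \<le> l' c"
    and l'V: "\<forall>u\<in>V. (\<Sum>c\<in>fm_eliminate w C. l' c * fst c u) = 0"
    and l'neg: "(\<Sum>c\<in>fm_eliminate w C. l' c * snd c) < 0"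
    using insert.IH by blast
  obtain l where l0: "\<forall>c\<in>C. 0 \<le> l c"
    and pull: "\<And>F. (\<And>c d. F (fm_combine w c d) = (- fst d w) * F c + fst c w * F d) \<Longrightarrow>
      (\<Sum>c\<in>C. l c * F c) = (\<Sum>c'\<in>fm_eliminate w C. l' c' * F c')"
    using fm_eliminate_multipliers_pullback[OF insert.prems(1) l'0] by blast
  have "(\<Sum>c\<in>C. l c * fst c u) = (\<Sum>c'\<in>fm_eliminate w C. l' c' * fst c' u)" for u
    by (rule pull) (simp add: fm_combine_def)
  moreover have "(\<Sum>c\<in>C. l c * snd c) = (\<Sum>c'\<in>fm_eliminate w C. l' c' * snd c')"
    by (rule pull) (simp add: fm_combine_def)
  moreover have "fst c' w = 0" if "c' \<in> fm_eliminate w C" for c'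
    using that by (auto simp: fm_eliminate_def fm_combine_def)
  ultimately show ?case using l0 l'V l'neg by (intro exI[of _ l]) auto
qed

lemma farkas_lemma:
  fixes V :: "'v set" and I :: "'k set" and M :: "'k \<Rightarrow> 'v \<Rightarrow> real" and h :: "'k \<Rightarrow> real"
  assumes "finite V" "finite I" and "\<nexists>x. \<forall>i\<in>I. (\<Sum>u\<in>V. M i u * x u) \<le> h i"
  shows "\<exists>l. (\<forall>i\<in>I. 0 \<le> l i) \<and> (\<forall>u\<in>V. (\<Sum>i\<in>I. l i * M i u) = 0) \<and> (\<Sum>i\<in>I. l i * h i) < 0"
proof -
  define f where "f i = (M i, h i)" for i
  have "\<nexists>x. \<forall>c\<in>f ` I. (\<Sum>u\<in>V. fst c u * x u) \<le> snd c"
    using assms(3) by (auto simp: f_def)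
  then obtain lc where lc0: "\<forall>c\<in>f ` I. 0 \<le> lc c"
    and lcV: "\<forall>u\<in>V. (\<Sum>c\<in>f ` I. lc c * fst c u) = 0" and lcneg: "(\<Sum>c\<in>f ` I. lc c * snd c) < 0"
    using farkas_lemma_set[OF assms(1) finite_imageI[OF assms(2)]] by blast
  txt \<open>Several indices may carry the same constraint; split its multiplier evenly among them.\<close>
  define l where "l i = lc (f i) / card {i'\<in>I. f i' = f i}" for i
  have pull: "(\<Sum>i\<in>I. l i * F (f i)) = (\<Sum>c\<in>f ` I. lc c * F c)" for F
  proof -
    have "(\<Sum>i\<in>I. l i * F (f i)) = (\<Sum>c\<in>f ` I. \<Sum>i\<in>{i\<in>I. f i = c}. l i * F (f i))"
      using assms(2) by (rule sum.image_gen)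
    also have "\<dots> = (\<Sum>c\<in>f ` I. lc c * F c)"
    proof (rule sum.cong)
      fix c assume "c \<in> f ` I"
      then have "finite {i\<in>I. f i = c}" "{i\<in>I. f i = c} \<noteq> {}" using assms(2) by auto
      then show "(\<Sum>i\<in>{i\<in>I. f i = c}. l i * F (f i)) = lc c * F c"
        by (simp add: l_def card_gt_0_iff)
    qed simp
    finally show ?thesis .
  qed
  show ?thesis
  proof (intro exI conjI ballI)
    show "0 \<le> l i" if "i \<in> I" for i using lc0 that by (simp add: l_def)
    show "(\<Sum>i\<in>I. l i * M i u) = 0" if "u \<in> V" for u
      using pull[of "\<lambda>c. fst c u"] lcV that by (simp add: f_def)
    show "(\<Sum>i\<in>I. l i * h i) < 0" using pull[of snd] lcneg by (simp add: f_def)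
  qed
qed

section \<open>Indirect utility of gross substitutes valuations\<close>

definition indirect_utility :: "'i set \<Rightarrow> ('i set \<Rightarrow> real) \<Rightarrow> ('i \<Rightarrow> real) \<Rightarrow> real" where
  "indirect_utility Om v p = Max ((\<lambda>S. v S - sum p S) ` Pow Om)"

lemma indirect_utility_ge:
  "finite Om \<Longrightarrow> S \<subseteq> Om \<Longrightarrow> v S - sum p S \<le> indirect_utility Om v p"
  unfolding indirect_utility_def by (rule Max_ge) auto

lemma indirect_utility_attained:
  assumes "finite Om"
  obtains D where "D \<subseteq> Om" "indirect_utility Om v p = v D - sum p D"
proof -
  have "indirect_utility Om v p \<in> (\<lambda>S. v S - sum p S) ` Pow Om"
    unfolding indirect_utility_def using assms by (intro Max_in) auto
  then show ?thesis using that by auto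
qed

lemma demand_iff_indirect_utility:
  assumes "finite Om"
  shows "D \<in> demand Om v p \<longleftrightarrow> D \<subseteq> Om \<and> v D - sum p D = indirect_utility Om v p"
proof
  assume D: "D \<in> demand Om v p"
  obtain E where E: "E \<subseteq> Om" "indirect_utility Om v p = v E - sum p E"
    using indirect_utility_attained[OF assms] .
  have "D \<subseteq> Om" and "v E - sum p E \<le> v D - sum p D"
    using D E(1) unfolding demand_def by blast+
  then show "D \<subseteq> Om \<and> v D - sum p D = indirect_utility Om v p"
    using indirect_utility_ge[OF assms \<open>D \<subseteq> Om\<close>, of v p] E(2) by linarith
next
  assume "D \<subseteq> Om \<and> v D - sum p D = indirect_utility Om v p"
  then show "D \<in> demand Om v p"
    using indirect_utility_ge[OF assms] by (auto simp: demand_def)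
qed

lemma demand_nonempty: "finite Om \<Longrightarrow> \<exists>D. D \<in> demand Om v p"
  by (metis demand_iff_indirect_utility indirect_utility_attained)

lemma indirect_utility_ge_demand:
  assumes "finite Om" and "D \<in> demand Om v q"
  shows "indirect_utility Om v q + sum q D - sum p D \<le> indirect_utility Om v p"
  using assms indirect_utility_ge[OF assms(1), of D v p] by (simp add: demand_iff_indirect_utility)

lemma gross_substituteD:
  assumes "gross_substitute Om v" and "\<forall>j\<in>Om. 0 \<le> p j \<and> p j \<le> q j" and "D \<in> demand Om v p"
  obtains F where "F \<in> demand Om v q" and "{j\<in>D. p j = q j} \<subseteq> F"
proof -
  have "0 \<le> p j \<and> p j \<le> q j" if "j \<in> Om" for j using assms(2) that by blast
  from assms(1)[unfolded gross_substitute_def, rule_format, OF this assms(3)] that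
  show ?thesis by blast
qed

lemma gross_substitute_keeps_untouched_items:
  assumes "gross_substitute Om v" and "D \<in> demand Om v p"
    and "\<forall>j\<in>Om. 0 \<le> p j" and "\<forall>j\<in>Om. 0 \<le> c j"
  obtains F where "F \<in> demand Om v (\<lambda>j. p j + c j)" and "{j\<in>D. c j = 0} \<subseteq> F"
proof -
  have "\<forall>j\<in>Om. 0 \<le> p j \<and> p j \<le> p j + c j" using assms(3,4) by auto
  from gross_substituteD[OF assms(1) this assms(2)]
  obtain F where "F \<in> demand Om v (\<lambda>j. p j + c j)" "{j\<in>D. p j = p j + c j} \<subseteq> F" .
  then show ?thesis using that by auto
qed

lemma gross_substitute_indirect_utility_step:
  fixes x a c :: "'i \<Rightarrow> real" and h :: real
  assumes fin: "finite Om" and gs: "gross_substitute Om v"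
    and x0: "\<forall>j\<in>Om. 0 \<le> x j" and a0: "\<forall>j\<in>Om. 0 \<le> a j" and c0: "\<forall>j\<in>Om. 0 \<le> c j"
    and disj: "\<forall>j\<in>Om. a j = 0 \<or> c j = 0" and h0: "0 \<le> h"
    and D: "D \<in> demand Om v x" and D': "D' \<in> demand Om v (\<lambda>j. x j + h * a j)"
  shows "indirect_utility Om v (\<lambda>j. x j + h * a j + c j) - indirect_utility Om v (\<lambda>j. x j + h * a j)
      + h * sum a D'
    \<le> indirect_utility Om v (\<lambda>j. x j + c j) - indirect_utility Om v x + h * sum a D"
proof -
  have "\<forall>j\<in>Om. 0 \<le> x j + h * a j" using x0 a0 h0 by simp
  then obtain F where F: "F \<in> demand Om v (\<lambda>j. x j + h * a j + c j)" and D'F: "{j\<in>D'. c j = 0} \<subseteq> F"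
    using gross_substitute_keeps_untouched_items[OF gs D' _ c0] by blast
  have D'_sub: "D' \<subseteq> Om" and F_sub: "F \<subseteq> Om"
    using D' F unfolding demand_def by blast+
  have "sum a D' = sum a {j\<in>D'. a j \<noteq> 0}"
    using finite_subset[OF D'_sub fin] by (intro sum.mono_neutral_right) auto
  also have "\<dots> \<le> sum a F"
  proof (rule sum_mono2)
    show "finite F" using finite_subset[OF F_sub fin] .
    show "{j\<in>D'. a j \<noteq> 0} \<subseteq> F" using disj D'F D'_sub by blast
    show "0 \<le> a j" if "j \<in> F - {j\<in>D'. a j \<noteq> 0}" for j using that a0 F_sub by blast
  qed
  finally have "h * sum a D' \<le> h * sum a F"
    using h0 by (rule mult_left_mono)
  moreover have "indirect_utility Om v x - h * sum a D \<le> indirect_utility Om v (\<lambda>j. x j + h * a j)"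
    using indirect_utility_ge_demand[OF fin D, of "\<lambda>j. x j + h * a j"]
    by (simp add: sum.distrib sum_distrib_left)
  moreover have "indirect_utility Om v (\<lambda>j. x j + h * a j + c j) + h * sum a F
      \<le> indirect_utility Om v (\<lambda>j. x j + c j)"
    using indirect_utility_ge_demand[OF fin F, of "\<lambda>j. x j + c j"]
    by (simp add: sum.distrib sum_distrib_left)
  ultimately show ?thesis by linarith
qed

lemma gross_substitute_indirect_utility_submodular_approx:
  fixes m a c :: "'i \<Rightarrow> real" and N :: nat
  assumes fin: "finite Om" and gs: "gross_substitute Om v"
    and m0: "\<forall>j\<in>Om. 0 \<le> m j" and a0: "\<forall>j\<in>Om. 0 \<le> a j" and c0: "\<forall>j\<in>Om. 0 \<le> c j"
    and disj: "\<forall>j\<in>Om. a j = 0 \<or> c j = 0" and N: "0 < N"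
  shows "indirect_utility Om v (\<lambda>j. m j + a j + c j) + indirect_utility Om v m
    \<le> indirect_utility Om v (\<lambda>j. m j + a j) + indirect_utility Om v (\<lambda>j. m j + c j) + sum a Om / N"
proof -
  txt \<open>Raise the prices from m to m + a in N equal steps, with and without the increment c;
    by the previous lemma the potential g is nonincreasing along the path.\<close>
  define h where "h = 1 / real N"
  define x where "x k j = m j + real k * h * a j" for k j
  define D where "D k = (SOME D. D \<in> demand Om v (x k))" for k
  define g where "g k = indirect_utility Om v (\<lambda>j. x k j + c j) - indirect_utility Om v (x k)
    + h * sum a (D k)" for k
  have h0: "0 \<le> h" by (simp add: h_def)
  have D: "D k \<in> demand Om v (x k)" for k
    unfolding D_def using demand_nonempty[OF fin] by (rule someI_ex)
  have x_Suc: "x (Suc k) = (\<lambda>j. x k j + h * a j)" for k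
    by (auto simp: x_def algebra_simps)
  have "g (Suc k) \<le> g k" for k
    using gross_substitute_indirect_utility_step[OF fin gs _ a0 c0 disj h0 D, of k "D (Suc k)"]
      D[of "Suc k"] m0 a0 h0
    unfolding g_def x_Suc by (simp add: x_def)
  then have "g N \<le> g 0"
    using lift_Suc_antimono_le[of g] by simp
  moreover have "x 0 = m" "x N = (\<lambda>j. m j + a j)"
    using N by (auto simp: x_def h_def)
  ultimately have "indirect_utility Om v (\<lambda>j. m j + a j + c j) - indirect_utility Om v (\<lambda>j. m j + a j)
      + h * sum a (D N) \<le> indirect_utility Om v (\<lambda>j. m j + c j) - indirect_utility Om v m + h * sum a (D 0)"
    unfolding g_def by (simp only:)
  moreover have "D N \<subseteq> Om" "D 0 \<subseteq> Om" using D unfolding demand_def by blast+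
  then have "0 \<le> h * sum a (D N)" and "h * sum a (D 0) \<le> h * sum a Om"
    using a0 fin h0 by (auto intro!: mult_nonneg_nonneg mult_left_mono sum_nonneg sum_mono2)
  ultimately show ?thesis
    by (simp add: h_def)
qed

lemma gross_substitute_indirect_utility_submodular:
  fixes m a c :: "'i \<Rightarrow> real"
  assumes "finite Om" and "gross_substitute Om v"
    and "\<forall>j\<in>Om. 0 \<le> m j" and a0: "\<forall>j\<in>Om. 0 \<le> a j" and "\<forall>j\<in>Om. 0 \<le> c j"
    and "\<forall>j\<in>Om. a j = 0 \<or> c j = 0"
  shows "indirect_utility Om v (\<lambda>j. m j + a j + c j) + indirect_utility Om v m
    \<le> indirect_utility Om v (\<lambda>j. m j + a j) + indirect_utility Om v (\<lambda>j. m j + c j)"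
    (is "?L \<le> ?R")
proof (rule ccontr)
  assume "\<not> ?L \<le> ?R"
  then have "0 < ?L - ?R" by simp
  then obtain n where n: "sum a Om < real n * (?L - ?R)"
    using reals_Archimedean3 by blast
  have "0 \<le> sum a Om" using a0 by (simp add: sum_nonneg)
  then have "0 < n" using n by (cases n) auto
  then have "?L - ?R \<le> sum a Om / n"
    using gross_substitute_indirect_utility_submodular_approx[OF assms, of n] by simp
  then show False using n \<open>0 < n\<close> by (simp add: field_simps)
qed

lemma gross_substitute_demand_max_min:
  assumes fin: "finite Om" and gs: "gross_substitute Om v"
    and p0: "\<forall>j\<in>Om. 0 \<le> p j" and q0: "\<forall>j\<in>Om. 0 \<le> q j"
    and Dp: "D \<in> demand Om v p" and Dq: "D \<in> demand Om v q"
  shows "D \<in> demand Om v (\<lambda>j. max (p j) (q j)) \<and> D \<in> demand Om v (\<lambda>j. min (p j) (q j))"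
proof -
  define m where "m = (\<lambda>j. min (p j) (q j))"
  define M where "M = (\<lambda>j. max (p j) (q j))"
  have "indirect_utility Om v (\<lambda>j. m j + (p j - m j) + (q j - m j)) + indirect_utility Om v m
    \<le> indirect_utility Om v (\<lambda>j. m j + (p j - m j)) + indirect_utility Om v (\<lambda>j. m j + (q j - m j))"
    using p0 q0 by (intro gross_substitute_indirect_utility_submodular[OF fin gs])
      (auto simp: m_def min_def)
  moreover have "(\<lambda>j. m j + (p j - m j) + (q j - m j)) = M"
    by (auto simp: m_def M_def min_def max_def)
  ultimately have sub: "indirect_utility Om v M + indirect_utility Om v m
      \<le> indirect_utility Om v p + indirect_utility Om v q"
    by simp
  have DO: "D \<subseteq> Om" using Dp by (simp add: demand_def)
  have "sum p D + sum q D = sum M D + sum m D"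
    unfolding sum.distrib[symmetric] by (rule sum.cong) (auto simp: M_def m_def)
  moreover have "v D - sum M D \<le> indirect_utility Om v M" "v D - sum m D \<le> indirect_utility Om v m"
    using indirect_utility_ge[OF fin DO] by auto
  moreover have "indirect_utility Om v p = v D - sum p D" "indirect_utility Om v q = v D - sum q D"
    using Dp Dq fin by (simp_all add: demand_iff_indirect_utility)
  txt \<open>At M and m together D earns V p + V q, which by submodularity is the most possible.\<close>
  ultimately have "v D - sum M D = indirect_utility Om v M" "v D - sum m D = indirect_utility Om v m"
    using sub by linarith+
  then show ?thesis using DO fin by (simp add: demand_iff_indirect_utility flip: M_def m_def)
qed

section \<open>Welfare and the lattice of equilibrium prices\<close>

definition welfare :: "'i set \<Rightarrow> 'b set \<Rightarrow> ('b \<Rightarrow> 'i set \<Rightarrow> real) \<Rightarrow> ('i \<Rightarrow> real) \<Rightarrow> ('b \<Rightarrow> 'i set) \<Rightarrow> real" where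
  "welfare Om B v r A = (\<Sum>b\<in>B. v b (A b)) + sum r (Om - (\<Union>b\<in>B. A b))"

lemma sum_over_allocation:
  assumes "is_allocation Om B A" "finite Om" "finite B"
  shows "sum p Om = (\<Sum>b\<in>B. sum p (A b)) + sum p (Om - (\<Union>b\<in>B. A b))"
proof -
  have sub: "(\<Union>b\<in>B. A b) \<subseteq> Om" using assms(1) by (auto simp: is_allocation_def)
  have "sum p (\<Union>b\<in>B. A b) = (\<Sum>b\<in>B. sum p (A b))"
    using assms finite_subset by (intro sum.UNION_disjoint) (auto simp: is_allocation_def)
  moreover have "sum p Om = sum p (Om - (\<Union>b\<in>B. A b)) + sum p (\<Union>b\<in>B. A b)"
    using sub assms(2) by (rule sum.subset_diff)
  ultimately show ?thesis by (simp add: add.commute)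
qed

lemma welfare_diff_walrasian_eq_reserve:
  assumes fin: "finite Om" "finite B" and X: "walrasian_eq_reserve Om B v r X p"
    and Z: "is_allocation Om B Z"
  shows "welfare Om B v r X - welfare Om B v r Z =
    (\<Sum>b\<in>B. (v b (X b) - sum p (X b)) - (v b (Z b) - sum p (Z b))) + (\<Sum>j\<in>Om - (\<Union>b\<in>B. Z b). p j - r j)"
proof -
  have "is_allocation Om B X" and "sum r (Om - (\<Union>b\<in>B. X b)) = sum p (Om - (\<Union>b\<in>B. X b))"
    using X by (auto simp: walrasian_eq_reserve_def intro: sum.cong)
  then show ?thesis
    using sum_over_allocation[OF _ fin, of X p] sum_over_allocation[OF Z fin, of p]
    unfolding welfare_def by (simp add: sum_subtractf sum.distrib algebra_simps)
qed

lemma walrasian_eq_reserve_exchange_allocation: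
  assumes fin: "finite Om" "finite B" and X: "walrasian_eq_reserve Om B v r X p"
    and Y: "walrasian_eq_reserve Om B v r Y q"
  shows "walrasian_eq_reserve Om B v r Y p"
proof -
  have XA: "is_allocation Om B X" and YA: "is_allocation Om B Y"
    using X Y by (auto simp: walrasian_eq_reserve_def)
  define s where "s b = (v b (X b) - sum p (X b)) - (v b (Y b) - sum p (Y b))" for b
  define s' where "s' b = (v b (Y b) - sum q (Y b)) - (v b (X b) - sum q (X b))" for b
  have s0: "\<forall>b\<in>B. 0 \<le> s b" and s'0: "\<forall>b\<in>B. 0 \<le> s' b"
    using X Y XA YA
    by (auto simp: s_def s'_def walrasian_eq_reserve_def envy_free_def demand_def is_allocation_def)
  have t0: "\<forall>j\<in>Om - (\<Union>b\<in>B. Y b). 0 \<le> p j - r j" and t'0: "\<forall>j\<in>Om - (\<Union>b\<in>B. X b). 0 \<le> q j - r j"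
    using X Y by (auto simp: walrasian_eq_reserve_def)
  txt \<open>The two welfare differences are opposite, and each is a sum of nonnegative slacks.\<close>
  have "sum s B + (\<Sum>j\<in>Om - (\<Union>b\<in>B. Y b). p j - r j) + (sum s' B + (\<Sum>j\<in>Om - (\<Union>b\<in>B. X b). q j - r j)) = 0"
    using welfare_diff_walrasian_eq_reserve[OF fin X YA] welfare_diff_walrasian_eq_reserve[OF fin Y XA]
    by (simp add: s_def s'_def)
  moreover have "0 \<le> sum s B" "0 \<le> sum s' B"
    "0 \<le> (\<Sum>j\<in>Om - (\<Union>b\<in>B. Y b). p j - r j)" "0 \<le> (\<Sum>j\<in>Om - (\<Union>b\<in>B. X b). q j - r j)"
    using s0 s'0 t0 t'0 by (auto intro: sum_nonneg)
  ultimately have "sum s B = 0" "(\<Sum>j\<in>Om - (\<Union>b\<in>B. Y b). p j - r j) = 0"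
    by linarith+
  then have s_zero: "\<forall>b\<in>B. s b = 0" and "\<forall>j\<in>Om - (\<Union>b\<in>B. Y b). p j = r j"
    using s0 t0 fin sum_nonneg_eq_0_iff[of B s] sum_nonneg_eq_0_iff[of "Om - (\<Union>b\<in>B. Y b)" "\<lambda>j. p j - r j"]
    by auto
  moreover have "Y b \<in> demand Om (v b) p" if "b \<in> B" for b
    using X YA s_zero that
    by (auto simp: s_def walrasian_eq_reserve_def envy_free_def demand_def is_allocation_def)
  ultimately show ?thesis using X YA by (simp add: walrasian_eq_reserve_def envy_free_def)
qed

lemma walrasian_eq_reserve_min_max:
  assumes fin: "finite Om" "finite B" and r0: "\<forall>j\<in>Om. 0 \<le> r j"
    and gs: "\<forall>b\<in>B. gross_substitute Om (v b)"
    and X: "walrasian_eq_reserve Om B v r X p" and Y: "walrasian_eq_reserve Om B v r Y q"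
  shows "walrasian_eq_reserve Om B v r Y (\<lambda>j. min (p j) (q j))"
    and "walrasian_eq_reserve Om B v r Y (\<lambda>j. max (p j) (q j))"
proof -
  have Yp: "walrasian_eq_reserve Om B v r Y p"
    using walrasian_eq_reserve_exchange_allocation[OF fin X Y] .
  have "\<forall>j\<in>Om. 0 \<le> p j" "\<forall>j\<in>Om. 0 \<le> q j"
    using X Y r0 by (force simp: walrasian_eq_reserve_def)+
  then have "Y b \<in> demand Om (v b) (\<lambda>j. max (p j) (q j)) \<and> Y b \<in> demand Om (v b) (\<lambda>j. min (p j) (q j))"
    if "b \<in> B" for b
    using gross_substitute_demand_max_min[OF fin(1)] gs Yp Y that
    by (simp add: walrasian_eq_reserve_def envy_free_def)
  then show "walrasian_eq_reserve Om B v r Y (\<lambda>j. min (p j) (q j))"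
    and "walrasian_eq_reserve Om B v r Y (\<lambda>j. max (p j) (q j))"
    using Yp Y by (auto simp: walrasian_eq_reserve_def envy_free_def)
qed

section \<open>Reserve prices as an additional bidder\<close>

lemma demand_of_price_increase_outside:
  assumes "D \<in> demand Om v q" and "\<forall>j\<in>Om. q j \<le> p j" and "\<forall>j\<in>D. p j = q j"
  shows "D \<in> demand Om v p"
proof -
  have D: "D \<subseteq> Om" "\<forall>T\<subseteq>Om. v T - sum q T \<le> v D - sum q D"
    using assms(1) unfolding demand_def by blast+
  have "sum p D = sum q D" using assms(3) by (intro sum.cong) auto
  moreover have "v T - sum p T \<le> v D - sum q D" if T: "T \<subseteq> Om" for T
  proof -
    have "sum q T \<le> sum p T" using T assms(2) by (intro sum_mono) blast
    moreover have "v T - sum q T \<le> v D - sum q D" using D(2) T by blast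
    ultimately show ?thesis by linarith
  qed
  ultimately show ?thesis
    using D(1) unfolding demand_def by simp
qed

lemma demand_additive_iff:
  assumes "finite Om"
  shows "U \<in> demand Om (sum r) p \<longleftrightarrow> U \<subseteq> Om \<and> (\<forall>j\<in>U. p j \<le> r j) \<and> (\<forall>j\<in>Om - U. r j \<le> p j)"
proof
  assume U: "U \<in> demand Om (sum r) p"
  then have sub: "U \<subseteq> Om" and opt: "\<forall>T\<subseteq>Om. sum r T - sum p T \<le> sum r U - sum p U"
    unfolding demand_def by blast+
  have finU: "finite U" using sub assms finite_subset by blast
  have "p j \<le> r j" if "j \<in> U" for j
  proof -
    have "sum r (U - {j}) - sum p (U - {j}) \<le> sum r U - sum p U"
      using opt sub by blast
    then show ?thesis using finU that by (simp add: sum_diff1)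
  qed
  moreover have "r j \<le> p j" if "j \<in> Om - U" for j
  proof -
    have "sum r (insert j U) - sum p (insert j U) \<le> sum r U - sum p U"
      using opt sub that by blast
    then show ?thesis using finU that by simp
  qed
  ultimately show "U \<subseteq> Om \<and> (\<forall>j\<in>U. p j \<le> r j) \<and> (\<forall>j\<in>Om - U. r j \<le> p j)"
    using sub by blast
next
  assume U: "U \<subseteq> Om \<and> (\<forall>j\<in>U. p j \<le> r j) \<and> (\<forall>j\<in>Om - U. r j \<le> p j)"
  have "sum r T - sum p T \<le> sum r U - sum p U" if T: "T \<subseteq> Om" for T
  proof -
    define f where "f j = r j - p j" for j
    have fin: "finite T" "finite U" using T U assms finite_subset by blast+
    have "sum f (T - U) \<le> 0" using T U by (intro sum_nonpos) (auto simp: f_def)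
    moreover have "0 \<le> sum f (U - T)" using U by (intro sum_nonneg) (auto simp: f_def)
    moreover have "sum f T = sum f (T \<inter> U) + sum f (T - U)" "sum f U = sum f (U \<inter> T) + sum f (U - T)"
      using fin by (simp_all add: sum.Int_Diff)
    ultimately have "sum f T \<le> sum f U" by (simp add: Int_commute)
    then show ?thesis by (simp add: f_def sum_subtractf)
  qed
  then show "U \<in> demand Om (sum r) p" using U unfolding demand_def by blast
qed

lemma walrasian_eq_with_auctioneer:
  assumes fin: "finite Om" and r0: "\<forall>j\<in>Om. 0 \<le> r j" and aB: "a \<notin> B"
    and eq: "walrasian_eq_reserve Om B v r A p"
  shows "walrasian_eq Om (insert a B) (v(a := (\<lambda>S. sum r S))) (A(a := Om - (\<Union>b\<in>B. A b))) p"
    (is "walrasian_eq Om _ ?v' ?A' p")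
proof -
  have A: "is_allocation Om B A" and rp: "\<forall>j\<in>Om. r j \<le> p j"
    and pU: "\<forall>j\<in>Om - (\<Union>b\<in>B. A b). p j = r j"
    using eq by (simp_all add: walrasian_eq_reserve_def)
  have "is_allocation Om (insert a B) ?A'"
    using A aB unfolding is_allocation_def by auto
  moreover have "Om - (\<Union>b\<in>B. A b) \<in> demand Om (sum r) p"
    using rp pU fin by (simp add: demand_additive_iff)
  then have "envy_free Om (insert a B) ?v' ?A' p"
    using eq aB unfolding envy_free_def walrasian_eq_reserve_def by auto
  moreover have "Om - (\<Union>b\<in>insert a B. ?A' b) = {}"
    using aB by auto
  ultimately show ?thesis
    using rp r0 unfolding walrasian_eq_def by (auto intro: order_trans)
qed

lemma walrasian_eq_reserve_of_walrasian_eq_with_auctioneer: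
  assumes fin: "finite Om" and aB: "a \<notin> B"
    and A: "is_allocation Om B A" and pU: "\<forall>j\<in>Om - (\<Union>b\<in>B. A b). p j = r j"
    and pp': "\<forall>j\<in>(\<Union>b\<in>B. A b). p' j = p j"
    and eq: "walrasian_eq Om (insert a B) (v(a := (\<lambda>S. sum r S))) (A(a := Om - (\<Union>b\<in>B. A b))) p'"
  shows "walrasian_eq_reserve Om B v r A p"
proof -
  define U where "U = Om - (\<Union>b\<in>B. A b)"
  have ef: "envy_free Om (insert a B) (v(a := (\<lambda>S. sum r S))) (A(a := U)) p'"
    using eq by (simp add: walrasian_eq_def U_def)
  then have "U \<in> demand Om (sum r) p'" by (simp add: envy_free_def)
  then have low: "\<forall>j\<in>U. p' j \<le> r j" and high: "\<forall>j\<in>Om - U. r j \<le> p' j"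
    using fin by (simp_all add: demand_additive_iff)
  have "r j \<le> p j \<and> p' j \<le> p j" if j: "j \<in> Om" for j
  proof (cases "j \<in> U")
    case True
    then have "p j = r j" "p' j \<le> r j" using pU low by (simp_all add: U_def)
    then show ?thesis by simp
  next
    case False
    then have "p' j = p j" "r j \<le> p' j" using pp' high j by (auto simp: U_def)
    then show ?thesis by simp
  qed
  then have rp: "\<forall>j\<in>Om. r j \<le> p j" and p'p: "\<forall>j\<in>Om. p' j \<le> p j"
    by simp_all
  have "A b \<in> demand Om (v b) p" if b: "b \<in> B" for b
  proof (rule demand_of_price_increase_outside[OF _ p'p])
    show "A b \<in> demand Om (v b) p'"
      using ef b aB unfolding envy_free_def by (metis fun_upd_other insertCI)
    show "\<forall>j\<in>A b. p j = p' j" using pp' b by auto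
  qed
  then show ?thesis
    using A rp pU by (simp add: walrasian_eq_reserve_def envy_free_def)
qed

section \<open>The linear program LP_r\<close>

definition lp_load :: "'i set \<Rightarrow> 'b set \<Rightarrow> ('b \<Rightarrow> 'i set \<Rightarrow> real) \<Rightarrow> 'i \<Rightarrow> real" where
  "lp_load Om B x j = (\<Sum>b\<in>B. \<Sum>S\<in>{S. S \<subseteq> Om \<and> j \<in> S}. x b S)"

definition lp_of_allocation :: "('b \<Rightarrow> 'i set) \<Rightarrow> 'b \<Rightarrow> 'i set \<Rightarrow> real" where
  "lp_of_allocation A b S = of_bool (S = A b)"

lemma lp_feasible_iff:
  "lp_feasible Om B x \<longleftrightarrow> (\<forall>b\<in>B. \<forall>S. S \<subseteq> Om \<longrightarrow> 0 \<le> x b S) \<and>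
     (\<forall>j\<in>Om. lp_load Om B x j \<le> 1) \<and> (\<forall>b\<in>B. (\<Sum>S\<in>Pow Om. x b S) \<le> 1)"
  by (simp add: lp_feasible_def lp_load_def)

lemma lp_objective_eq:
  "lp_objective Om B v r x =
     (\<Sum>b\<in>B. \<Sum>S\<in>Pow Om. x b S * v b S) + (\<Sum>j\<in>Om. (1 - lp_load Om B x j) * r j)"
  by (simp add: lp_objective_def lp_load_def)

lemma lp_load_add_scaled:
  "lp_load Om B (\<lambda>b S. x b S + e * z b S) j = lp_load Om B x j + e * lp_load Om B z j"
  by (simp add: lp_load_def sum.distrib sum_distrib_left)

lemma lp_objective_add_scaled:
  "lp_objective Om B v r (\<lambda>b S. x b S + e * z b S) = lp_objective Om B v r x +
    e * ((\<Sum>b\<in>B. \<Sum>S\<in>Pow Om. z b S * v b S) - (\<Sum>j\<in>Om. lp_load Om B z j * r j))"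
  unfolding lp_objective_eq lp_load_add_scaled
  by (simp add: algebra_simps sum.distrib sum_subtractf sum_distrib_left)

lemma sum_of_bool_eq_mult:
  fixes f :: "'a \<Rightarrow> 'b::comm_semiring_1"
  shows "finite X \<Longrightarrow> (\<Sum>x\<in>X. of_bool (x = a) * f x) = of_bool (a \<in> X) * f a"
  by (simp add: Collect_conv_if)

lemma sum_mult_of_bool_eq_member:
  fixes f :: "'a \<Rightarrow> 'b::comm_semiring_1"
  assumes "finite X" "a \<in> X"
  shows "(\<Sum>x\<in>X. f x * of_bool (a = x)) = f a"
proof -
  have "(\<Sum>x\<in>X. f x * of_bool (a = x)) = sum f (X \<inter> {x. a = x})"
    using assms(1) by (rule sum_mult_of_bool_eq)
  also have "X \<inter> {x. a = x} = {a}" using assms(2) by blast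
  finally show ?thesis by simp
qed

lemma sum_of_bool_mem_mult:
  fixes f :: "'a \<Rightarrow> 'b::comm_semiring_1"
  assumes "finite X" "Y \<subseteq> X"
  shows "(\<Sum>x\<in>X. of_bool (x \<in> Y) * f x) = sum f Y"
proof -
  have "(\<Sum>x\<in>X. of_bool (x \<in> Y) * f x) = sum f (X \<inter> {x. x \<in> Y})"
    using assms(1) by (rule sum_of_bool_mult_eq)
  also have "X \<inter> {x. x \<in> Y} = Y" using assms(2) by blast
  finally show ?thesis .
qed

lemma lp_load_eq_sum_Pow:
  assumes "finite Om"
  shows "lp_load Om B x j = (\<Sum>b\<in>B. \<Sum>S\<in>Pow Om. of_bool (j \<in> S) * x b S)"
proof -
  have "Pow Om \<inter> {S. j \<in> S} = {S. S \<subseteq> Om \<and> j \<in> S}" by blast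
  moreover have "(\<Sum>S\<in>Pow Om. of_bool (j \<in> S) * x b S) = sum (x b) (Pow Om \<inter> {S. j \<in> S})" for b
    using assms by (intro sum_of_bool_mult_eq) simp
  ultimately show ?thesis by (simp add: lp_load_def)
qed

lemma lp_load_of_allocation:
  assumes fin: "finite Om" "finite B" and A: "is_allocation Om B A"
  shows "lp_load Om B (lp_of_allocation A) j = of_bool (j \<in> (\<Union>b\<in>B. A b))"
proof -
  have "lp_load Om B (lp_of_allocation A) j = (\<Sum>b\<in>B. of_bool (j \<in> A b))"
    unfolding lp_load_def lp_of_allocation_def
    using A fin by (intro sum.cong refl) (auto simp: is_allocation_def Collect_conv_if)
  also have "\<dots> = of_bool (j \<in> (\<Union>b\<in>B. A b))"
  proof (cases "j \<in> (\<Union>b\<in>B. A b)")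
    case True
    then obtain b0 where b0: "b0 \<in> B" "j \<in> A b0" by blast
    have "j \<in> A b \<longleftrightarrow> b = b0" if "b \<in> B" for b
      using A b0 that unfolding is_allocation_def by blast
    then have "(\<Sum>b\<in>B. of_bool (j \<in> A b) :: real) = (\<Sum>b\<in>B. of_bool (b = b0))"
      by (intro sum.cong) auto
    then show ?thesis using True b0 fin by (simp add: Collect_conv_if)
  qed auto
  finally show ?thesis .
qed

lemma lp_feasible_of_allocation:
  assumes "finite Om" "finite B" and A: "is_allocation Om B A"
  shows "lp_feasible Om B (lp_of_allocation A)"
proof -
  have "(\<Sum>S\<in>Pow Om. lp_of_allocation A b S) = 1" if "b \<in> B" for b
    using that A assms(1) by (simp add: lp_of_allocation_def is_allocation_def Collect_conv_if)
  then show ?thesis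
    using lp_load_of_allocation[OF assms] by (simp add: lp_feasible_iff lp_of_allocation_def)
qed

lemma lp_objective_of_allocation:
  assumes fin: "finite Om" "finite B" and A: "is_allocation Om B A"
  shows "lp_objective Om B v r (lp_of_allocation A) = welfare Om B v r A"
proof -
  have "(\<Sum>S\<in>Pow Om. lp_of_allocation A b S * v b S) = v b (A b)" if "b \<in> B" for b
    using that A fin by (simp add: lp_of_allocation_def sum_of_bool_eq_mult is_allocation_def)
  moreover have "(\<Sum>j\<in>Om. (1 - lp_load Om B (lp_of_allocation A) j) * r j)
      = sum r (Om - (\<Union>b\<in>B. A b))"
  proof -
    have "(\<Sum>j\<in>Om. (1 - lp_load Om B (lp_of_allocation A) j) * r j)
        = (\<Sum>j\<in>Om. of_bool (j \<in> Om - (\<Union>b\<in>B. A b)) * r j)"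
      by (intro sum.cong) (auto simp: lp_load_of_allocation[OF fin A])
    also have "\<dots> = sum r (Om - (\<Union>b\<in>B. A b))"
      using fin(1) by (rule sum_of_bool_mem_mult) blast
    finally show ?thesis .
  qed
  ultimately show ?thesis
    by (simp add: lp_objective_eq welfare_def)
qed

lemma sum_bundle_prices:
  assumes "finite Om"
  shows "(\<Sum>b\<in>B. \<Sum>S\<in>Pow Om. y b S * sum p S) = (\<Sum>j\<in>Om. p j * lp_load Om B y j)"
proof -
  have pointwise: "y b S * sum p S = (\<Sum>j\<in>Om. p j * (of_bool (j \<in> S) * y b S))"
    if "S \<in> Pow Om" for b S
  proof -
    have "y b S * sum p S = (\<Sum>j\<in>S. p j * y b S)"
      by (simp add: sum_distrib_right mult.commute)
    also have "\<dots> = (\<Sum>j\<in>Om. of_bool (j \<in> S) * (p j * y b S))"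
      using assms that by (intro sum_of_bool_mem_mult[symmetric]) auto
    also have "\<dots> = (\<Sum>j\<in>Om. p j * (of_bool (j \<in> S) * y b S))"
      by (intro sum.cong) (simp_all add: ac_simps)
    finally show ?thesis .
  qed
  have "(\<Sum>b\<in>B. \<Sum>S\<in>Pow Om. y b S * sum p S)
      = (\<Sum>b\<in>B. \<Sum>S\<in>Pow Om. \<Sum>j\<in>Om. p j * (of_bool (j \<in> S) * y b S))"
    by (intro sum.cong refl pointwise)
  also have "\<dots> = (\<Sum>b\<in>B. \<Sum>j\<in>Om. \<Sum>S\<in>Pow Om. p j * (of_bool (j \<in> S) * y b S))"
    by (intro sum.cong refl sum.swap)
  also have "\<dots> = (\<Sum>j\<in>Om. \<Sum>b\<in>B. \<Sum>S\<in>Pow Om. p j * (of_bool (j \<in> S) * y b S))"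
    by (rule sum.swap)
  also have "\<dots> = (\<Sum>j\<in>Om. p j * (\<Sum>b\<in>B. \<Sum>S\<in>Pow Om. of_bool (j \<in> S) * y b S))"
    by (simp only: sum_distrib_left)
  finally show ?thesis by (simp add: lp_load_eq_sum_Pow[OF assms])
qed

lemma sum_bundle_value_le:
  fixes y :: "'i set \<Rightarrow> real"
  assumes "\<forall>S. S \<subseteq> Om \<longrightarrow> v S - sum p S \<le> u" and "0 \<le> u"
    and "\<forall>S. S \<subseteq> Om \<longrightarrow> 0 \<le> y S" and "(\<Sum>S\<in>Pow Om. y S) \<le> 1"
  shows "(\<Sum>S\<in>Pow Om. y S * v S) \<le> u + (\<Sum>S\<in>Pow Om. y S * sum p S)"
proof -
  have "(\<Sum>S\<in>Pow Om. y S * v S) \<le> (\<Sum>S\<in>Pow Om. u * y S + y S * sum p S)"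
  proof (rule sum_mono)
    fix S assume "S \<in> Pow Om"
    then have S: "S \<subseteq> Om" by simp
    have "v S - sum p S \<le> u" using assms(1) S by blast
    then have "v S \<le> u + sum p S" by simp
    moreover have "0 \<le> y S" using assms(3) S by blast
    ultimately have "y S * v S \<le> y S * (u + sum p S)" by (rule mult_left_mono)
    then show "y S * v S \<le> u * y S + y S * sum p S" by (simp add: algebra_simps)
  qed
  also have "\<dots> = u * (\<Sum>S\<in>Pow Om. y S) + (\<Sum>S\<in>Pow Om. y S * sum p S)"
    by (simp add: sum.distrib sum_distrib_left)
  also have "\<dots> \<le> u + (\<Sum>S\<in>Pow Om. y S * sum p S)"
    using mult_left_mono[OF assms(4,2)] by simp
  finally show ?thesis .
qed

lemma lp_objective_le_welfare_approx:
  fixes d :: real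
  assumes fin: "finite Om" "finite B" and A: "is_allocation Om B A"
    and v0: "\<forall>b\<in>B. v b {} = 0"
    and rp: "\<forall>j\<in>Om. r j \<le> p j" and pU: "\<forall>j\<in>Om - (\<Union>b\<in>B. A b). p j = r j" and d0: "0 \<le> d"
    and near: "\<forall>b\<in>B. \<forall>S. S \<subseteq> Om \<longrightarrow> v b S - sum p S \<le> v b (A b) - sum p (A b) + d"
    and y: "lp_feasible Om B y"
  shows "lp_objective Om B v r y \<le> welfare Om B v r A + card B * d"
proof -
  define u where "u b = v b (A b) - sum p (A b) + d" for b
  have load1: "\<forall>j\<in>Om. lp_load Om B y j \<le> 1"
    using y by (simp add: lp_feasible_iff)
  have "(\<Sum>S\<in>Pow Om. y b S * v b S) \<le> u b + (\<Sum>S\<in>Pow Om. y b S * sum p S)" if b: "b \<in> B" for b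
  proof (rule sum_bundle_value_le)
    show "\<forall>S. S \<subseteq> Om \<longrightarrow> v b S - sum p S \<le> u b" using near b by (simp add: u_def)
    show "0 \<le> u b" using near b v0 by (force simp: u_def)
    show "\<forall>S. S \<subseteq> Om \<longrightarrow> 0 \<le> y b S" "(\<Sum>S\<in>Pow Om. y b S) \<le> 1"
      using y b by (simp_all add: lp_feasible_iff)
  qed
  then have "(\<Sum>b\<in>B. \<Sum>S\<in>Pow Om. y b S * v b S) \<le> (\<Sum>b\<in>B. u b + (\<Sum>S\<in>Pow Om. y b S * sum p S))"
    by (rule sum_mono)
  then have "lp_objective Om B v r y \<le> (\<Sum>b\<in>B. u b) + (\<Sum>j\<in>Om. p j * lp_load Om B y j + (1 - lp_load Om B y j) * r j)"
    using sum_bundle_prices[OF fin(1), where B=B and y=y and p=p]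
    by (simp add: lp_objective_eq sum.distrib)
  also have "\<dots> \<le> (\<Sum>b\<in>B. u b) + sum p Om"
  proof -
    have "p j * lp_load Om B y j + (1 - lp_load Om B y j) * r j \<le> p j" if "j \<in> Om" for j
    proof -
      have "0 \<le> (1 - lp_load Om B y j) * (p j - r j)" using load1 rp that by simp
      then show ?thesis by (simp add: algebra_simps)
    qed
    then show ?thesis using sum_mono by (simp add: sum_mono)
  qed
  also have "\<dots> = welfare Om B v r A + card B * d"
  proof -
    have "sum p (Om - (\<Union>b\<in>B. A b)) = sum r (Om - (\<Union>b\<in>B. A b))"
      using pU by (intro sum.cong) auto
    then show ?thesis
      using sum_over_allocation[OF A fin, of p] by (simp add: u_def welfare_def sum.distrib sum_subtractf)
  qed
  finally show ?thesis .
qed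

lemma walrasian_eq_reserve_imp_lp_optimal:
  assumes fin: "finite Om" "finite B" and v0: "\<forall>b\<in>B. v b {} = 0"
    and eq: "walrasian_eq_reserve Om B v r A p"
  shows "lp_optimal Om B v r (lp_of_allocation A)"
proof -
  have A: "is_allocation Om B A" using eq by (simp add: walrasian_eq_reserve_def)
  have "\<forall>j\<in>Om. r j \<le> p j" and "\<forall>j\<in>Om - (\<Union>b\<in>B. A b). p j = r j"
    and "\<forall>b\<in>B. \<forall>S. S \<subseteq> Om \<longrightarrow> v b S - sum p S \<le> v b (A b) - sum p (A b) + 0"
    using eq by (auto simp: walrasian_eq_reserve_def envy_free_def demand_def)
  then have "lp_objective Om B v r y \<le> welfare Om B v r A" if "lp_feasible Om B y" for y
    using lp_objective_le_welfare_approx[where d=0 and v=v and y=y] fin A v0 that by simp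
  then show ?thesis
    using lp_feasible_of_allocation[OF fin A] lp_objective_of_allocation[OF fin A]
    by (simp add: lp_optimal_def)
qed

text \<open>Prices supporting A as an equilibrium with reserve prices, as a linear system:
  p j \<ge> r j for every item (index Inl j), p j \<le> r j for every unallocated item
  (index Inr (Inl j)), and p(A b) - p(S) \<le> v b (A b) - v b S (index Inr (Inr (b, S))).\<close>

definition price_constraint_index :: "'i set \<Rightarrow> 'b set \<Rightarrow> ('b \<Rightarrow> 'i set) \<Rightarrow> ('i + 'i + 'b \<times> 'i set) set" where
  "price_constraint_index Om B A = Om <+> ((Om - (\<Union>b\<in>B. A b)) <+> (B \<times> Pow Om))"

definition price_constraint_coeff :: "('b \<Rightarrow> 'i set) \<Rightarrow> 'i + 'i + 'b \<times> 'i set \<Rightarrow> 'i \<Rightarrow> real" where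
  "price_constraint_coeff A =
     case_sum (\<lambda>j u. - of_bool (u = j))
       (case_sum (\<lambda>j u. of_bool (u = j)) (\<lambda>(b, S) u. of_bool (u \<in> A b) - of_bool (u \<in> S)))"

definition price_constraint_bound ::
  "('b \<Rightarrow> 'i set \<Rightarrow> real) \<Rightarrow> ('i \<Rightarrow> real) \<Rightarrow> ('b \<Rightarrow> 'i set) \<Rightarrow> 'i + 'i + 'b \<times> 'i set \<Rightarrow> real" where
  "price_constraint_bound v r A =
     case_sum (\<lambda>j. - r j) (case_sum (\<lambda>j. r j) (\<lambda>(b, S). v b (A b) - v b S))"

lemma walrasian_eq_reserve_of_price_constraints:
  assumes fin: "finite Om" and A: "is_allocation Om B A"
    and p: "\<forall>i\<in>price_constraint_index Om B A.
              (\<Sum>u\<in>Om. price_constraint_coeff A i u * p u) \<le> price_constraint_bound v r A i"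
  shows "walrasian_eq_reserve Om B v r A p"
proof -
  have AO: "A b \<subseteq> Om" if "b \<in> B" for b using A that by (simp add: is_allocation_def)
  have I: "Inl j \<in> price_constraint_index Om B A \<longleftrightarrow> j \<in> Om"
    "Inr (Inl j) \<in> price_constraint_index Om B A \<longleftrightarrow> j \<in> Om - (\<Union>b\<in>B. A b)"
    "Inr (Inr (b, S)) \<in> price_constraint_index Om B A \<longleftrightarrow> b \<in> B \<and> S \<subseteq> Om" for j b S
    by (auto simp: price_constraint_index_def)
  have rp: "r j \<le> p j" if "j \<in> Om" for j
    using p[rule_format, of "Inl j"] fin that
    by (simp add: I price_constraint_coeff_def price_constraint_bound_def sum_negf Collect_conv_if)
  moreover have "p j = r j" if "j \<in> Om - (\<Union>b\<in>B. A b)" for j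
    using p[rule_format, of "Inr (Inl j)"] fin that rp[of j]
    by (simp add: I price_constraint_coeff_def price_constraint_bound_def sum_negf Collect_conv_if)
  moreover have "A b \<in> demand Om (v b) p" if b: "b \<in> B" for b
  proof -
    have "v b S - sum p S \<le> v b (A b) - sum p (A b)" if S: "S \<subseteq> Om" for S
    proof -
      have "(\<Sum>u\<in>Om. (of_bool (u \<in> A b) - of_bool (u \<in> S)) * p u) \<le> v b (A b) - v b S"
        using p[rule_format, of "Inr (Inr (b, S))"] b S
        by (simp add: I price_constraint_coeff_def price_constraint_bound_def)
      then show ?thesis
        using fin S AO[OF b] by (simp add: left_diff_distrib sum_subtractf Int_absorb1)
    qed
    then show ?thesis using AO[OF b] by (simp add: demand_def)
  qed
  ultimately show ?thesis
    using A by (simp add: walrasian_eq_reserve_def envy_free_def)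
qed

lemma no_walrasian_eq_reserve_certificate:
  fixes A :: "'b \<Rightarrow> 'i set"
  assumes fin: "finite Om" "finite B" and A: "is_allocation Om B A"
    and none: "\<nexists>p. walrasian_eq_reserve Om B v r A p"
  obtains \<alpha> \<beta> :: "'i \<Rightarrow> real" and \<gamma> :: "'b \<Rightarrow> 'i set \<Rightarrow> real" where
    "\<forall>j\<in>Om. 0 \<le> \<alpha> j" "\<forall>j\<in>Om. 0 \<le> \<beta> j" "\<forall>j\<in>(\<Union>b\<in>B. A b). \<beta> j = 0"
    "\<forall>b\<in>B. \<forall>S. S \<subseteq> Om \<longrightarrow> 0 \<le> \<gamma> b S"
    "\<forall>j\<in>Om. lp_load Om B \<gamma> j = (\<Sum>b\<in>B. of_bool (j \<in> A b) * (\<Sum>S\<in>Pow Om. \<gamma> b S)) + \<beta> j - \<alpha> j"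
    "(\<Sum>b\<in>B. \<Sum>S\<in>Pow Om. \<gamma> b S * (v b (A b) - v b S)) + (\<Sum>j\<in>Om. (\<beta> j - \<alpha> j) * r j) < 0"
proof -
  let ?I = "price_constraint_index Om B A"
  let ?U = "Om - (\<Union>b\<in>B. A b)"
  have "finite ?I" using fin by (simp add: price_constraint_index_def)
  moreover have "\<nexists>p. \<forall>i\<in>?I. (\<Sum>u\<in>Om. price_constraint_coeff A i u * p u) \<le> price_constraint_bound v r A i"
    using walrasian_eq_reserve_of_price_constraints[OF fin(1) A] none by blast
  ultimately obtain l where l0: "\<forall>i\<in>?I. 0 \<le> l i"
    and bal: "\<forall>u\<in>Om. (\<Sum>i\<in>?I. l i * price_constraint_coeff A i u) = 0"
    and neg: "(\<Sum>i\<in>?I. l i * price_constraint_bound v r A i) < 0"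
    using farkas_lemma[OF fin(1)] by blast
  define \<alpha> where "\<alpha> j = l (Inl j)" for j
  define \<beta> where "\<beta> j = of_bool (j \<in> ?U) * l (Inr (Inl j))" for j
  define \<gamma> where "\<gamma> b S = l (Inr (Inr (b, S)))" for b S
  have sum_I: "(\<Sum>i\<in>?I. f i) = (\<Sum>j\<in>Om. f (Inl j)) + (\<Sum>j\<in>?U. f (Inr (Inl j)))
      + (\<Sum>b\<in>B. \<Sum>S\<in>Pow Om. f (Inr (Inr (b, S))))" for f :: "_ \<Rightarrow> real"
    unfolding price_constraint_index_def using fin by (simp add: sum.Plus sum.cartesian_product' o_def)
  have sum_U: "(\<Sum>j\<in>?U. f j) = (\<Sum>j\<in>Om. of_bool (j \<in> ?U) * f j)" for f :: "'i \<Rightarrow> real"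
    using fin(1) by (rule sum_of_bool_mem_mult[symmetric]) blast
  show ?thesis
  proof (rule that)
    show "\<forall>j\<in>Om. 0 \<le> \<alpha> j" "\<forall>j\<in>Om. 0 \<le> \<beta> j" "\<forall>b\<in>B. \<forall>S. S \<subseteq> Om \<longrightarrow> 0 \<le> \<gamma> b S"
      using l0 by (auto simp: \<alpha>_def \<beta>_def \<gamma>_def price_constraint_index_def)
    show "\<forall>j\<in>(\<Union>b\<in>B. A b). \<beta> j = 0" by (auto simp: \<beta>_def)
  next
    show "\<forall>u\<in>Om. lp_load Om B \<gamma> u = (\<Sum>b\<in>B. of_bool (u \<in> A b) * (\<Sum>S\<in>Pow Om. \<gamma> b S)) + \<beta> u - \<alpha> u"
    proof
      fix u assume u: "u \<in> Om"
      have "0 = (\<Sum>i\<in>?I. l i * price_constraint_coeff A i u)" using bal u by simp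
      also have "\<dots> = (\<Sum>j\<in>Om. - (\<alpha> j * of_bool (u = j))) + (\<Sum>j\<in>Om. \<beta> j * of_bool (u = j))
          + (\<Sum>b\<in>B. \<Sum>S\<in>Pow Om. of_bool (u \<in> A b) * \<gamma> b S - of_bool (u \<in> S) * \<gamma> b S)"
        unfolding sum_I sum_U
        by (simp add: price_constraint_coeff_def \<alpha>_def \<beta>_def \<gamma>_def algebra_simps)
      also have "\<dots> = - \<alpha> u + \<beta> u + (\<Sum>b\<in>B. of_bool (u \<in> A b) * (\<Sum>S\<in>Pow Om. \<gamma> b S))
          - lp_load Om B \<gamma> u"
        using fin(1) u
        by (simp add: sum_mult_of_bool_eq_member lp_load_eq_sum_Pow sum_negf sum_subtractf sum_distrib_left)
      finally show "lp_load Om B \<gamma> u = (\<Sum>b\<in>B. of_bool (u \<in> A b) * (\<Sum>S\<in>Pow Om. \<gamma> b S)) + \<beta> u - \<alpha> u"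
        by linarith
    qed
  next
    have "(\<Sum>i\<in>?I. l i * price_constraint_bound v r A i) =
        (\<Sum>b\<in>B. \<Sum>S\<in>Pow Om. \<gamma> b S * (v b (A b) - v b S)) + (\<Sum>j\<in>Om. (\<beta> j - \<alpha> j) * r j)"
      unfolding sum_I sum_U
      by (simp add: price_constraint_bound_def \<alpha>_def \<beta>_def \<gamma>_def algebra_simps sum.distrib sum_subtractf sum_negf)
    then show "(\<Sum>b\<in>B. \<Sum>S\<in>Pow Om. \<gamma> b S * (v b (A b) - v b S)) + (\<Sum>j\<in>Om. (\<beta> j - \<alpha> j) * r j) < 0"
      using neg by simp
  qed
qed

definition bundle_shift :: "'i set \<Rightarrow> ('b \<Rightarrow> 'i set) \<Rightarrow> ('b \<Rightarrow> 'i set \<Rightarrow> real) \<Rightarrow> 'b \<Rightarrow> 'i set \<Rightarrow> real" where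
  "bundle_shift Om A \<gamma> b S = \<gamma> b S - of_bool (S = A b) * (\<Sum>S'\<in>Pow Om. \<gamma> b S')"

lemma lp_load_bundle_shift:
  assumes fin: "finite Om" and A: "is_allocation Om B A" and j: "j \<in> Om"
    and balance: "lp_load Om B \<gamma> j = (\<Sum>b\<in>B. of_bool (j \<in> A b) * (\<Sum>S\<in>Pow Om. \<gamma> b S)) + \<beta> j - \<alpha> j"
  shows "lp_load Om B (bundle_shift Om A \<gamma>) j = \<beta> j - \<alpha> j"
proof -
  have "(\<Sum>S\<in>{S. S \<subseteq> Om \<and> j \<in> S}. of_bool (S = A b) * c) = of_bool (j \<in> A b) * c"
    if "b \<in> B" for b and c :: real
  proof -
    have "A b \<subseteq> Om" using A that by (simp add: is_allocation_def)
    then show ?thesis using fin by (simp add: sum_of_bool_eq_mult)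
  qed
  then show ?thesis
    using balance by (simp add: lp_load_def bundle_shift_def sum_subtractf)
qed

lemma sum_bundle_shift:
  "finite Om \<Longrightarrow> A b \<subseteq> Om \<Longrightarrow> (\<Sum>S\<in>Pow Om. bundle_shift Om A \<gamma> b S * f S) =
     (\<Sum>S\<in>Pow Om. \<gamma> b S * f S) - (\<Sum>S\<in>Pow Om. \<gamma> b S) * f (A b)"
  by (simp add: bundle_shift_def left_diff_distrib sum_subtractf mult.assoc sum_of_bool_eq_mult)

lemma lp_feasible_bundle_shift:
  fixes \<alpha> \<beta> :: "'i \<Rightarrow> real" and \<gamma> :: "'b \<Rightarrow> 'i set \<Rightarrow> real"
  assumes fin: "finite Om" "finite B" and A: "is_allocation Om B A"
    and \<alpha>0: "\<forall>j\<in>Om. 0 \<le> \<alpha> j" and \<beta>0: "\<forall>j\<in>Om. 0 \<le> \<beta> j" and \<beta>A: "\<forall>j\<in>(\<Union>b\<in>B. A b). \<beta> j = 0"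
    and \<gamma>0: "\<forall>b\<in>B. \<forall>S. S \<subseteq> Om \<longrightarrow> 0 \<le> \<gamma> b S"
    and load: "\<forall>j\<in>Om. lp_load Om B (bundle_shift Om A \<gamma>) j = \<beta> j - \<alpha> j"
  obtains \<epsilon> :: real where "0 < \<epsilon>"
    and "lp_feasible Om B (\<lambda>b S. lp_of_allocation A b S + \<epsilon> * bundle_shift Om A \<gamma> b S)"
proof -
  define g where "g b = (\<Sum>S\<in>Pow Om. \<gamma> b S)" for b
  define \<epsilon> where "\<epsilon> = 1 / (1 + sum g B + sum \<beta> Om)"
  have AO: "A b \<subseteq> Om" if "b \<in> B" for b using A that by (simp add: is_allocation_def)
  have g0: "0 \<le> g b" if "b \<in> B" for b using \<gamma>0 that unfolding g_def by (intro sum_nonneg) auto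
  have "0 \<le> sum g B" "0 \<le> sum \<beta> Om" using g0 \<beta>0 by (simp_all add: sum_nonneg)
  then have \<epsilon>0: "0 < \<epsilon>" by (simp add: \<epsilon>_def)
  have \<epsilon>_small: "\<epsilon> * t \<le> 1" if "0 \<le> t" "t \<le> sum g B + sum \<beta> Om" for t
    using that \<open>0 \<le> sum g B\<close> \<open>0 \<le> sum \<beta> Om\<close> by (simp add: \<epsilon>_def field_simps)
  have "lp_feasible Om B (\<lambda>b S. lp_of_allocation A b S + \<epsilon> * bundle_shift Om A \<gamma> b S)"
    unfolding lp_feasible_iff
  proof (intro conjI ballI allI impI)
    fix b S assume b: "b \<in> B" and S: "S \<subseteq> Om"
    have "g b \<le> sum g B" using g0 b fin(2) by (intro member_le_sum) auto
    then have "\<epsilon> * g b \<le> 1"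
      using g0 b \<open>0 \<le> sum \<beta> Om\<close> by (intro \<epsilon>_small) auto
    moreover have "0 \<le> \<epsilon> * \<gamma> b S" using \<gamma>0 b S \<epsilon>0 by simp
    ultimately show "0 \<le> lp_of_allocation A b S + \<epsilon> * bundle_shift Om A \<gamma> b S"
      by (cases "S = A b") (simp_all add: bundle_shift_def g_def lp_of_allocation_def algebra_simps)
  next
    fix b assume b: "b \<in> B"
    have "(\<Sum>S\<in>Pow Om. bundle_shift Om A \<gamma> b S) = 0"
      using sum_bundle_shift[where A=A and b=b and \<gamma>=\<gamma> and f="\<lambda>_. 1", OF fin(1) AO[OF b]] by simp
    then show "(\<Sum>S\<in>Pow Om. lp_of_allocation A b S + \<epsilon> * bundle_shift Om A \<gamma> b S) \<le> 1"
      using lp_feasible_of_allocation[OF fin A] b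
      by (simp add: lp_feasible_iff sum.distrib sum_distrib_left[symmetric])
  next
    fix j assume j: "j \<in> Om"
    have "\<beta> j \<le> sum \<beta> Om" using \<beta>0 j fin(1) by (intro member_le_sum) auto
    then have "\<epsilon> * \<beta> j \<le> 1"
      using \<beta>0 j \<open>0 \<le> sum g B\<close> by (intro \<epsilon>_small) auto
    moreover have "0 \<le> \<epsilon> * \<alpha> j" using \<alpha>0 j \<epsilon>0 by simp
    ultimately show "lp_load Om B (\<lambda>b S. lp_of_allocation A b S + \<epsilon> * bundle_shift Om A \<gamma> b S) j \<le> 1"
      using \<beta>A unfolding lp_load_add_scaled
      by (auto simp: lp_load_of_allocation[OF fin A] load[rule_format, OF j] algebra_simps)
  qed
  then show ?thesis using that \<epsilon>0 by blast
qed

lemma lp_of_allocation_not_optimal: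
  fixes \<alpha> \<beta> :: "'i \<Rightarrow> real" and \<gamma> :: "'b \<Rightarrow> 'i set \<Rightarrow> real"
  assumes fin: "finite Om" "finite B" and A: "is_allocation Om B A"
    and \<alpha>0: "\<forall>j\<in>Om. 0 \<le> \<alpha> j" and \<beta>0: "\<forall>j\<in>Om. 0 \<le> \<beta> j" and \<beta>A: "\<forall>j\<in>(\<Union>b\<in>B. A b). \<beta> j = 0"
    and \<gamma>0: "\<forall>b\<in>B. \<forall>S. S \<subseteq> Om \<longrightarrow> 0 \<le> \<gamma> b S"
    and balance: "\<forall>j\<in>Om. lp_load Om B \<gamma> j = (\<Sum>b\<in>B. of_bool (j \<in> A b) * (\<Sum>S\<in>Pow Om. \<gamma> b S)) + \<beta> j - \<alpha> j"
    and negative: "(\<Sum>b\<in>B. \<Sum>S\<in>Pow Om. \<gamma> b S * (v b (A b) - v b S)) + (\<Sum>j\<in>Om. (\<beta> j - \<alpha> j) * r j) < 0"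
  shows "\<not> lp_optimal Om B v r (lp_of_allocation A)"
proof
  assume opt: "lp_optimal Om B v r (lp_of_allocation A)"
  let ?z = "bundle_shift Om A \<gamma>"
  have load: "\<forall>j\<in>Om. lp_load Om B ?z j = \<beta> j - \<alpha> j"
    using lp_load_bundle_shift[OF fin(1) A] balance by blast
  obtain \<epsilon> where \<epsilon>0: "0 < \<epsilon>" and feas: "lp_feasible Om B (\<lambda>b S. lp_of_allocation A b S + \<epsilon> * ?z b S)"
    using lp_feasible_bundle_shift[OF fin A \<alpha>0 \<beta>0 \<beta>A \<gamma>0 load] .
  txt \<open>The gain along the direction is exactly minus the Farkas value.\<close>
  have "(\<Sum>S\<in>Pow Om. ?z b S * v b S) = (\<Sum>S\<in>Pow Om. \<gamma> b S * v b S) - (\<Sum>S\<in>Pow Om. \<gamma> b S) * v b (A b)"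
    if "b \<in> B" for b
  proof -
    have "A b \<subseteq> Om" using A that by (simp add: is_allocation_def)
    then show ?thesis by (rule sum_bundle_shift[OF fin(1)])
  qed
  then have "0 < (\<Sum>b\<in>B. \<Sum>S\<in>Pow Om. ?z b S * v b S) - (\<Sum>j\<in>Om. lp_load Om B ?z j * r j)"
    using negative load by (simp add: sum_subtractf right_diff_distrib sum_distrib_right cong: sum.cong)
  then have "lp_objective Om B v r (lp_of_allocation A) <
      lp_objective Om B v r (\<lambda>b S. lp_of_allocation A b S + \<epsilon> * ?z b S)"
    using \<epsilon>0 unfolding lp_objective_add_scaled by simp
  then show False
    using opt feas unfolding lp_optimal_def by (meson leD)
qed

lemma lp_optimal_imp_walrasian_eq_reserve:
  fixes A :: "'b \<Rightarrow> 'i set"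
  assumes "finite Om" "finite B" and "is_allocation Om B A"
    and "lp_optimal Om B v r (lp_of_allocation A)"
  shows "\<exists>p. walrasian_eq_reserve Om B v r A p"
proof (rule ccontr)
  assume "\<nexists>p. walrasian_eq_reserve Om B v r A p"
  then obtain \<alpha> \<beta> :: "'i \<Rightarrow> real" and \<gamma> where certificate:
    "\<forall>j\<in>Om. 0 \<le> \<alpha> j" "\<forall>j\<in>Om. 0 \<le> \<beta> j" "\<forall>j\<in>(\<Union>b\<in>B. A b). \<beta> j = 0"
    "\<forall>b\<in>B. \<forall>S. S \<subseteq> Om \<longrightarrow> 0 \<le> \<gamma> b S"
    "\<forall>j\<in>Om. lp_load Om B \<gamma> j = (\<Sum>b\<in>B. of_bool (j \<in> A b) * (\<Sum>S\<in>Pow Om. \<gamma> b S)) + \<beta> j - \<alpha> j"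
    "(\<Sum>b\<in>B. \<Sum>S\<in>Pow Om. \<gamma> b S * (v b (A b) - v b S)) + (\<Sum>j\<in>Om. (\<beta> j - \<alpha> j) * r j) < 0"
    by (rule no_walrasian_eq_reserve_certificate[OF assms(1-3)])
  show False
    using lp_of_allocation_not_optimal[OF assms(1-3) certificate] assms(4) by contradiction
qed

lemma walrasian_eq_reserve_iff_lp_optimal:
  assumes "finite Om" "finite B" and "\<forall>b\<in>B. v b {} = 0" and "is_allocation Om B A"
  shows "(\<exists>p. walrasian_eq_reserve Om B v r A p) \<longleftrightarrow> lp_optimal Om B v r (lp_of_allocation A)"
  using walrasian_eq_reserve_imp_lp_optimal[where v=v, OF assms(1-3)]
    lp_optimal_imp_walrasian_eq_reserve[OF assms(1,2,4)] by blast

section \<open>An ascending auction\<close>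

lemma valuation_mono: "valuation Om v \<Longrightarrow> S \<subseteq> T \<Longrightarrow> T \<subseteq> Om \<Longrightarrow> v S \<le> v T"
  by (simp add: valuation_def)

lemma valuation_nonneg: "valuation Om v \<Longrightarrow> S \<subseteq> Om \<Longrightarrow> 0 \<le> v S"
  using valuation_mono[of Om v "{}" S] by (simp add: valuation_def)

definition auction_price :: "('i \<Rightarrow> real) \<Rightarrow> real \<Rightarrow> ('i \<Rightarrow> nat) \<Rightarrow> 'i \<Rightarrow> real" where
  "auction_price r e k j = r j + e * real (k j)"

definition bidder_price :: "('i \<Rightarrow> real) \<Rightarrow> real \<Rightarrow> ('i \<Rightarrow> nat) \<Rightarrow> 'i set \<Rightarrow> 'i \<Rightarrow> real" where
  "bidder_price r e k H j = auction_price r e k j + (if j \<in> H then 0 else e)"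

definition raise_prices :: "('i \<Rightarrow> nat) \<Rightarrow> 'i set \<Rightarrow> 'i \<Rightarrow> nat" where
  "raise_prices k X j = (if j \<in> X then Suc (k j) else k j)"

text \<open>A state of the ascending auction with increment e: the tentative allocation A, item j
  at price r j + e * k j, and every bidder still wants its items at its personal prices,
  where items it does not hold cost one increment more.\<close>

definition auction_state ::
  "'i set \<Rightarrow> 'b set \<Rightarrow> ('b \<Rightarrow> 'i set \<Rightarrow> real) \<Rightarrow> ('i \<Rightarrow> real) \<Rightarrow> real \<Rightarrow> ('b \<Rightarrow> 'i set) \<Rightarrow> ('i \<Rightarrow> nat) \<Rightarrow> bool" where
  "auction_state Om B v r e A k \<longleftrightarrow> is_allocation Om B A \<and> (\<forall>j\<in>Om - (\<Union>b\<in>B. A b). k j = 0) \<and>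
     (\<forall>b\<in>B. \<exists>D\<in>demand Om (v b) (bidder_price r e k (A b)). A b \<subseteq> D)"

lemma bidder_price_raise_own:
  "H \<subseteq> D \<Longrightarrow> bidder_price r e (raise_prices k (D - H)) D = bidder_price r e k H"
  by (auto simp: fun_eq_iff bidder_price_def auction_price_def raise_prices_def algebra_simps)

lemma bidder_price_raise_other:
  assumes "0 \<le> e" and "H \<inter> G = {}" and "H \<subseteq> D"
  shows "bidder_price r e k G j \<le> bidder_price r e (raise_prices k (D - H)) (G - D) j"
    and "j \<notin> D \<Longrightarrow> bidder_price r e (raise_prices k (D - H)) (G - D) j = bidder_price r e k G j"
  using assms by (auto simp: bidder_price_def auction_price_def raise_prices_def algebra_simps)

lemma auction_state_bounded:
  assumes fin: "finite Om" "finite B" and val: "\<forall>b\<in>B. valuation Om (v b)"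
    and r0: "\<forall>j\<in>Om. 0 \<le> r j" and st: "auction_state Om B v r e A k" and j: "j \<in> Om"
  shows "e * k j \<le> (\<Sum>b\<in>B. v b Om)"
proof -
  have v_nonneg: "0 \<le> v b S" "v b S \<le> v b Om" if "b \<in> B" "S \<subseteq> Om" for b S
    using val that valuation_nonneg valuation_mono by blast+
  then have M0: "0 \<le> (\<Sum>b\<in>B. v b Om)" by (simp add: sum_nonneg)
  show ?thesis
  proof (cases "j \<in> (\<Union>b\<in>B. A b)")
    case False
    then show ?thesis using st j M0 by (simp add: auction_state_def)
  next
    case True
    then obtain b where b: "b \<in> B" "j \<in> A b" by blast
    then obtain D where D: "D \<in> demand Om (v b) (bidder_price r e k (A b))" "A b \<subseteq> D"
      using st by (auto simp: auction_state_def)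
    have DO: "D \<subseteq> Om" and jD: "j \<in> D" using D b unfolding demand_def by blast+
    txt \<open>Dropping j from a demanded bundle cannot help, so its price is at most its marginal value.\<close>
    have DjO: "D - {j} \<subseteq> Om" using DO by blast
    then have "v b (D - {j}) - sum (bidder_price r e k (A b)) (D - {j})
        \<le> v b D - sum (bidder_price r e k (A b)) D"
      using D(1) by (simp add: demand_def)
    moreover have "sum (bidder_price r e k (A b)) D
        = bidder_price r e k (A b) j + sum (bidder_price r e k (A b)) (D - {j})"
      using finite_subset[OF DO fin(1)] jD by (rule sum.remove)
    moreover have "0 \<le> v b (D - {j})" "v b D \<le> v b Om"
      using v_nonneg[OF b(1) DjO] v_nonneg[OF b(1) DO] by simp_all
    moreover have "v b Om \<le> (\<Sum>b\<in>B. v b Om)"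
      using b(1) fin(2) v_nonneg(1) by (intro member_le_sum) simp_all
    moreover have "0 \<le> r j" using r0 j by blast
    moreover have "bidder_price r e k (A b) j = r j + e * k j"
      using b by (simp add: bidder_price_def auction_price_def)
    ultimately show ?thesis by linarith
  qed
qed

lemma auction_step:
  assumes fin: "finite Om" and gs: "\<forall>b\<in>B. gross_substitute Om (v b)"
    and r0: "\<forall>j\<in>Om. 0 \<le> r j" and e0: "0 < e"
    and st: "auction_state Om B v r e A k" and b: "b \<in> B"
    and unhappy: "A b \<notin> demand Om (v b) (bidder_price r e k (A b))"
  obtains A' k' where "auction_state Om B v r e A' k'" and "sum k Om < sum k' Om"
proof -
  txt \<open>Bidder b takes a demanded bundle D \<supseteq> A b away from the others, and the prices of
    the newly acquired items rise by one increment.\<close>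
  obtain D where D: "D \<in> demand Om (v b) (bidder_price r e k (A b))" and AD: "A b \<subseteq> D"
    using st b by (auto simp: auction_state_def)
  have DO: "D \<subseteq> Om" using D unfolding demand_def by blast
  have "D \<noteq> A b" using D unhappy by blast
  then obtain j0 where j0: "j0 \<in> D - A b" using AD by blast
  define A' where "A' c = (if c = b then D else A c - D)" for c
  define k' where "k' = raise_prices k (D - A b)"
  have alloc: "is_allocation Om B A" using st by (simp add: auction_state_def)
  have "is_allocation Om B A'"
    using alloc DO unfolding is_allocation_def A'_def by (auto; blast)
  moreover have "\<forall>j\<in>Om - (\<Union>c\<in>B. A' c). k' j = 0"
  proof
    fix j assume j: "j \<in> Om - (\<Union>c\<in>B. A' c)"
    then have "j \<notin> D" using b by (auto simp: A'_def)
    moreover from this have "j \<in> Om - (\<Union>c\<in>B. A c)" using j AD by (auto simp: A'_def split: if_splits)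
    ultimately show "k' j = 0" using st by (simp add: auction_state_def k'_def raise_prices_def)
  qed
  moreover have "\<exists>D'\<in>demand Om (v c) (bidder_price r e k' (A' c)). A' c \<subseteq> D'" if c: "c \<in> B" for c
  proof (cases "c = b")
    case True
    then show ?thesis using D AD by (auto simp: A'_def k'_def bidder_price_raise_own)
  next
    case False
    obtain Dc where Dc: "Dc \<in> demand Om (v c) (bidder_price r e k (A c))" "A c \<subseteq> Dc"
      using st c by (auto simp: auction_state_def)
    have disj: "A b \<inter> A c = {}" using alloc b c False by (simp add: is_allocation_def)
    have "\<forall>j\<in>Om. 0 \<le> bidder_price r e k (A c) j \<and> bidder_price r e k (A c) j \<le> bidder_price r e k' (A' c) j"
      using bidder_price_raise_other(1)[OF _ disj AD] r0 e0 False
      by (auto simp: A'_def k'_def bidder_price_def auction_price_def)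
    from gross_substituteD[OF gs[rule_format, OF c] this Dc(1)]
    obtain D2 where "D2 \<in> demand Om (v c) (bidder_price r e k' (A' c))"
      and "{j\<in>Dc. bidder_price r e k (A c) j = bidder_price r e k' (A' c) j} \<subseteq> D2" .
    moreover have "A' c \<subseteq> {j\<in>Dc. bidder_price r e k (A c) j = bidder_price r e k' (A' c) j}"
      using Dc(2) bidder_price_raise_other(2)[OF _ disj AD] e0 False by (auto simp: A'_def k'_def)
    ultimately show ?thesis by blast
  qed
  moreover have "sum k Om < sum k' Om"
    using fin j0 DO by (intro sum_strict_mono_ex1) (auto simp: k'_def raise_prices_def)
  ultimately show ?thesis
    using that unfolding auction_state_def by blast
qed

lemma auction_terminates:
  assumes fin: "finite Om" "finite B" and val: "\<forall>b\<in>B. valuation Om (v b)"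
    and gs: "\<forall>b\<in>B. gross_substitute Om (v b)" and r0: "\<forall>j\<in>Om. 0 \<le> r j" and e0: "0 < e"
  obtains A k where "auction_state Om B v r e A k"
    and "\<forall>b\<in>B. A b \<in> demand Om (v b) (bidder_price r e k (A b))"
proof -
  define K where "K = nat \<lceil>(\<Sum>b\<in>B. v b Om) / e\<rceil>"
  have bounded: "sum k Om < card Om * K + 1" if "auction_state Om B v r e A k" for A k
  proof -
    have "k j \<le> K" if "j \<in> Om" for j
    proof -
      have "real (k j) \<le> (\<Sum>b\<in>B. v b Om) / e"
        using auction_state_bounded[OF fin val r0 \<open>auction_state Om B v r e A k\<close> that] e0
        by (simp add: field_simps mult.commute)
      then show ?thesis unfolding K_def using real_nat_ceiling_ge of_nat_le_iff order_trans by blast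
    qed
    then show ?thesis using sum_bounded_above[of Om k K] by simp
  qed
  have "\<exists>D\<in>demand Om (v b) (bidder_price r e (\<lambda>_. 0) {}). {} \<subseteq> D" for b
    using demand_nonempty[OF fin(1), of "v b" "bidder_price r e (\<lambda>_. 0) {}"] by blast
  then have "auction_state Om B v r e (\<lambda>_. {}) (\<lambda>_. 0)"
    by (simp add: auction_state_def is_allocation_def)
  txt \<open>Each round raises the sum of the price levels k, which is bounded; so take a
    reachable state where this sum is maximal: there no bidder is left wanting.\<close>
  then have "\<exists>st. auction_state Om B v r e (fst st) (snd st) \<and>
      (\<forall>st'. auction_state Om B v r e (fst st') (snd st') \<longrightarrow> sum (snd st') Om \<le> sum (snd st) Om)"
    using bounded
    by (intro ex_has_greatest_nat[of "\<lambda>st. auction_state Om B v r e (fst st) (snd st)"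
          "((\<lambda>_. {}), (\<lambda>_. 0))" "\<lambda>st. sum (snd st) Om" "card Om * K + 1"]) simp_all
  then obtain st where st: "auction_state Om B v r e (fst st) (snd st)"
    and greatest: "\<And>st'. auction_state Om B v r e (fst st') (snd st') \<Longrightarrow> sum (snd st') Om \<le> sum (snd st) Om"
    by blast
  have "fst st b \<in> demand Om (v b) (bidder_price r e (snd st) (fst st b))" if b: "b \<in> B" for b
  proof (rule ccontr)
    assume "fst st b \<notin> demand Om (v b) (bidder_price r e (snd st) (fst st b))"
    then obtain A' k' where "auction_state Om B v r e A' k'" "sum (snd st) Om < sum k' Om"
      using auction_step[OF fin(1) gs r0 e0 st b] by blast
    then show False using greatest[of "(A', k')"] by simp
  qed
  then show ?thesis using that st by blast
qed

lemma approximate_walrasian_eq_reserve: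
  fixes e :: real
  assumes fin: "finite Om" "finite B" and val: "\<forall>b\<in>B. valuation Om (v b)"
    and gs: "\<forall>b\<in>B. gross_substitute Om (v b)" and r0: "\<forall>j\<in>Om. 0 \<le> r j" and e0: "0 < e"
  obtains A p where "is_allocation Om B A" and "\<forall>j\<in>Om. r j \<le> p j"
    and "\<forall>j\<in>Om - (\<Union>b\<in>B. A b). p j = r j"
    and "\<forall>b\<in>B. \<forall>S. S \<subseteq> Om \<longrightarrow> v b S - sum p S \<le> v b (A b) - sum p (A b) + e * card Om"
proof -
  obtain A k where st: "auction_state Om B v r e A k"
    and final: "\<forall>b\<in>B. A b \<in> demand Om (v b) (bidder_price r e k (A b))"
    using auction_terminates[OF assms] .
  define p where "p = auction_price r e k"
  have near: "v b S - sum p S \<le> v b (A b) - sum p (A b) + e * card Om" if b: "b \<in> B" and S: "S \<subseteq> Om" for b S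
  proof -
    have "v b S - sum (bidder_price r e k (A b)) S \<le> v b (A b) - sum (bidder_price r e k (A b)) (A b)"
      using final b S by (simp add: demand_def)
    moreover have "sum (bidder_price r e k (A b)) (A b) = sum p (A b)"
      by (simp add: bidder_price_def p_def)
    moreover have "sum (bidder_price r e k (A b)) S \<le> sum (\<lambda>j. p j + e) S"
      using e0 by (intro sum_mono) (simp add: bidder_price_def p_def)
    moreover have "sum (\<lambda>j. p j + e) S = sum p S + e * card S"
      by (simp add: sum.distrib)
    moreover have "e * card S \<le> e * card Om"
      using card_mono[OF fin(1) S] e0 by simp
    ultimately show ?thesis by linarith
  qed
  show ?thesis
  proof (rule that[of A p])
    show "is_allocation Om B A" using st by (simp add: auction_state_def)
    show "\<forall>j\<in>Om. r j \<le> p j" using e0 by (simp add: p_def auction_price_def)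
    show "\<forall>j\<in>Om - (\<Union>b\<in>B. A b). p j = r j"
      using st by (simp add: auction_state_def p_def auction_price_def)
    show "\<forall>b\<in>B. \<forall>S. S \<subseteq> Om \<longrightarrow> v b S - sum p S \<le> v b (A b) - sum p (A b) + e * card Om"
      using near by blast
  qed
qed

lemma welfare_maximizing_allocation:
  fixes Om :: "'i set" and B :: "'b set"
  assumes fin: "finite Om" "finite B"
  obtains A where "is_allocation Om B A" and "\<And>A'. is_allocation Om B A' \<Longrightarrow> welfare Om B v r A' \<le> welfare Om B v r A"
proof -
  txt \<open>Welfare only depends on the bundles of the bidders in B, so it suffices to
    maximize over the finitely many allocations that are empty outside B.\<close>
  define trim where "trim A b = (if b \<in> B then A b else {})" for A :: "'b \<Rightarrow> 'i set" and b
  define AL where "AL = {A. is_allocation Om B A \<and> trim A = A}"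
  have "AL \<subseteq> {A. \<forall>b. (b \<in> B \<longrightarrow> A b \<in> Pow Om) \<and> (b \<notin> B \<longrightarrow> A b = {})}"
    by (auto simp: AL_def is_allocation_def trim_def fun_eq_iff)
  moreover have "finite {A. \<forall>b. (b \<in> B \<longrightarrow> A b \<in> Pow Om) \<and> (b \<notin> B \<longrightarrow> A b = {})}"
    using fin by (intro finite_set_of_finite_funs) simp_all
  ultimately have "finite AL" by (rule finite_subset)
  moreover have "(\<lambda>_. {}) \<in> AL"
    by (simp add: AL_def trim_def is_allocation_def fun_eq_iff)
  ultimately have "Max (welfare Om B v r ` AL) \<in> welfare Om B v r ` AL"
    by (intro Max_in) auto
  then obtain A where A: "A \<in> AL" and A_max: "welfare Om B v r A = Max (welfare Om B v r ` AL)"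
    by auto
  have max: "\<forall>A'\<in>AL. welfare Om B v r A' \<le> welfare Om B v r A"
    using \<open>finite AL\<close> by (simp add: A_max)
  have "welfare Om B v r A' \<le> welfare Om B v r A" if "is_allocation Om B A'" for A'
  proof -
    have "trim A' \<in> AL" using that by (auto simp: AL_def trim_def is_allocation_def fun_eq_iff)
    moreover have "welfare Om B v r (trim A') = welfare Om B v r A'"
      by (simp add: welfare_def trim_def)
    ultimately show ?thesis using max by fastforce
  qed
  moreover have "is_allocation Om B A" using A by (simp add: AL_def)
  ultimately show ?thesis using that by blast
qed

section \<open>Existence of equilibria with reserve prices\<close>

lemma gross_substitute_walrasian_eq_reserve_exists:
  assumes fin: "finite Om" "finite B" and val: "\<forall>b\<in>B. valuation Om (v b)"
    and r0: "\<forall>j\<in>Om. 0 \<le> r j" and gs: "\<forall>b\<in>B. gross_substitute Om (v b)"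
  shows "\<exists>A p. walrasian_eq_reserve Om B v r A p"
proof -
  obtain As where As: "is_allocation Om B As"
    and max: "\<And>A. is_allocation Om B A \<Longrightarrow> welfare Om B v r A \<le> welfare Om B v r As"
    using welfare_maximizing_allocation[OF fin] by blast
  have v0: "\<forall>b\<in>B. v b {} = 0" using val by (simp add: valuation_def)
  txt \<open>Approximate equilibria for arbitrarily small increments squeeze the LP optimum
    down to the maximal welfare, so the integral solution of As is optimal.\<close>
  have "lp_objective Om B v r y \<le> welfare Om B v r As" if y: "lp_feasible Om B y" for y
  proof (rule field_le_epsilon)
    fix \<epsilon> :: real assume "0 < \<epsilon>"
    define e where "e = \<epsilon> / (card B * card Om + 1)"
    have e0: "0 < e" using \<open>0 < \<epsilon>\<close> by (simp add: e_def add_pos_nonneg)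
    obtain A p where A: "is_allocation Om B A" and rp: "\<forall>j\<in>Om. r j \<le> p j"
      and pU: "\<forall>j\<in>Om - (\<Union>b\<in>B. A b). p j = r j"
      and near: "\<forall>b\<in>B. \<forall>S. S \<subseteq> Om \<longrightarrow> v b S - sum p S \<le> v b (A b) - sum p (A b) + e * card Om"
      using approximate_walrasian_eq_reserve[OF fin val gs r0 e0] by blast
    have "lp_objective Om B v r y \<le> welfare Om B v r A + card B * (e * card Om)"
      by (rule lp_objective_le_welfare_approx[where v=v, OF fin A v0 rp pU _ near y]) (use e0 in simp)
    also have "\<dots> \<le> welfare Om B v r As + \<epsilon>"
    proof -
      have "0 < real (card B) * card Om + 1" by (intro add_nonneg_pos) simp_all
      then have "card B * (e * card Om) \<le> \<epsilon>"
        using \<open>0 < \<epsilon>\<close> by (simp add: e_def field_simps)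
      then show ?thesis using max[OF A] by linarith
    qed
    finally show "lp_objective Om B v r y \<le> welfare Om B v r As + \<epsilon>" .
  qed
  then have "lp_optimal Om B v r (lp_of_allocation As)"
    using lp_feasible_of_allocation[OF fin As] lp_objective_of_allocation[OF fin As]
    by (simp add: lp_optimal_def)
  then show ?thesis
    using lp_optimal_imp_walrasian_eq_reserve[OF fin As] by blast
qed

theorem theorem4:
  fixes Om :: "'i set" and B :: "'b set" and v :: "'b \<Rightarrow> 'i set \<Rightarrow> real"
    and r :: "'i \<Rightarrow> real" and a :: 'b
  assumes "finite Om" and "finite B"
    and "\<forall>b\<in>B. valuation Om (v b)"
    and "\<forall>j\<in>Om. 0 \<le> r j"
    and "a \<notin> B"
  shows
    "(\<forall>A p. is_allocation Om B A \<longrightarrow> (\<forall>j\<in>Om - (\<Union>b\<in>B. A b). p j = r j) \<longrightarrow>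
        (walrasian_eq_reserve Om B v r A p \<longleftrightarrow>
          (\<exists>p'. (\<forall>j\<in>(\<Union>b\<in>B. A b). p' j = p j) \<and>
                walrasian_eq Om (insert a B) (v(a := (\<lambda>S. sum r S)))
                  (A(a := Om - (\<Union>b\<in>B. A b))) p')))
     \<and> (\<forall>A. is_allocation Om B A \<longrightarrow>
        ((\<exists>p. walrasian_eq_reserve Om B v r A p) \<longleftrightarrow>
          lp_optimal Om B v r (\<lambda>b S. if S = A b then 1 else 0)))
     \<and> ((\<forall>b\<in>B. gross_substitute Om (v b)) \<longrightarrow>
        (\<exists>A p. walrasian_eq_reserve Om B v r A p) \<and>
        (\<forall>p q. (\<exists>A. walrasian_eq_reserve Om B v r A p) \<longrightarrow>
               (\<exists>A. walrasian_eq_reserve Om B v r A q) \<longrightarrow>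
               (\<exists>A. walrasian_eq_reserve Om B v r A (\<lambda>j. min (p j) (q j))) \<and>
               (\<exists>A. walrasian_eq_reserve Om B v r A (\<lambda>j. max (p j) (q j)))))"
proof (intro conjI allI impI)
  note fin = assms(1,2)
  show "walrasian_eq_reserve Om B v r A p \<longleftrightarrow>
      (\<exists>p'. (\<forall>j\<in>(\<Union>b\<in>B. A b). p' j = p j) \<and>
        walrasian_eq Om (insert a B) (v(a := (\<lambda>S. sum r S))) (A(a := Om - (\<Union>b\<in>B. A b))) p')"
    if "is_allocation Om B A" and "\<forall>j\<in>Om - (\<Union>b\<in>B. A b). p j = r j" for A p
    using walrasian_eq_with_auctioneer[OF fin(1) assms(4,5)]
      walrasian_eq_reserve_of_walrasian_eq_with_auctioneer[OF fin(1) assms(5) that] by blast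
  have "\<forall>b\<in>B. v b {} = 0" using assms(3) by (simp add: valuation_def)
  moreover have "(\<lambda>b S. if S = A b then 1 else 0) = lp_of_allocation A" for A :: "'b \<Rightarrow> 'i set"
    by (simp add: fun_eq_iff lp_of_allocation_def)
  ultimately show "(\<exists>p. walrasian_eq_reserve Om B v r A p) \<longleftrightarrow>
      lp_optimal Om B v r (\<lambda>b S. if S = A b then 1 else 0)" if "is_allocation Om B A" for A
    using walrasian_eq_reserve_iff_lp_optimal[OF fin _ that] by simp
  assume gs: "\<forall>b\<in>B. gross_substitute Om (v b)"
  show "\<exists>A p. walrasian_eq_reserve Om B v r A p"
    using gross_substitute_walrasian_eq_reserve_exists[OF fin assms(3,4) gs] .
  fix p q
  assume "\<exists>A. walrasian_eq_reserve Om B v r A p" and "\<exists>A. walrasian_eq_reserve Om B v r A q"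
  then obtain X Y where "walrasian_eq_reserve Om B v r X p" and "walrasian_eq_reserve Om B v r Y q"
    by blast
  from walrasian_eq_reserve_min_max[OF fin assms(4) gs this]
  show "\<exists>A. walrasian_eq_reserve Om B v r A (\<lambda>j. min (p j) (q j))"
    and "\<exists>A. walrasian_eq_reserve Om B v r A (\<lambda>j. max (p j) (q j))"
    by blast+
qed

end
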